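(* Let $\mathcal{S}$ be a circle with one of the projective structures of the context and $\xi\in\mathrm{Vect}(\mathcal{S})$ with flow $\varphi_s$. The infinitesimal Schwarzian $\mathbf{s}(\xi)=\frac{d}{ds}\big|_{s=0}\mathbf{S}(\varphi_s)$ satisfies $\mathbf{s}(\xi)=s_1(\xi)$, where $$\mathbf{s}(\xi)=\lambda\,d\Big(\frac{d\,\mathrm{Div}\,\xi}{\lambda}\Big)\qquad\text{and}\qquad s_1(\xi)=\tfrac32\big(L_\xi\mathrm{g}_1\big)\big|_\Delta .$$
   Context: $\mathcal{S}$ is either (a) $\mathbb{R}/2\pi\mathbb{Z}$ with developing map $\Phi:\mathbb{R}\to\mathbb{R}P^1=\mathbb{R}\cup\{\infty\}$, $\Phi(\theta)=2\tan(\theta/2)$; or (b) $\mathbb{R}P^1=\mathbb{R}/\pi\mathbb{Z}$ with $\Phi(\theta)=\tan\theta$. $\lambda=\Phi^*dt$ ($t$ the affine coordinate of $\mathbb{R}P^1$), $\mathrm{Div}\,\xi=(L_\xi\lambda)/\lambda$. For $\varphi\in\mathrm{Diff}_+(\mathcal{S})$, $\tilde\varphi$ is the diffeomorphism of $\mathbb{R}P^1$ with $\tilde\varphi\circ\Phi=\Phi\circ\varphi$ and $\mathbf{S}(\varphi)=\Phi^*S(\tilde\varphi)$, $S(\tilde\varphi)=\big(\tilde\varphi'''/\tilde\varphi'-\tfrac32(\tilde\varphi''/\tilde\varphi')^2\big)dt^2$. $\mathrm{g}_1$ is the Lorentz metric on $\mathcal{S}\times\mathcal{S}-\Delta$ obtained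 by descending $(\Phi\times\Phi)^*\big(4\,dt_1dt_2/(t_1-t_2)^2\big)$; $L_\xi$ is the Lie derivative along $\xi\oplus\xi$; $L_\xi\mathrm{g}_1$ extends smoothly to the diagonal $\Delta$ and $|_\Delta$ is pullback by $\theta\mapsto(\theta,\theta)$. *)

theory Defs
  imports "HOL-Analysis.Analysis"
begin

text \<open>The two projective circles of the context:
  CircA = R/2piZ with developing map 2 tan(theta/2);
  CircB = RP1 = R/piZ with developing map tan theta.
  Everything is computed on the universal cover R in the coordinate theta.\<close>

datatype proj_circle = CircA | CircB

fun period :: "proj_circle \<Rightarrow> real" where
  "period CircA = 2 * pi"
| "period CircB = pi"

fun Phi :: "proj_circle \<Rightarrow> real \<Rightarrow> real" where
  "Phi CircA \<theta> = 2 * tan (\<theta> / 2)"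
| "Phi CircB \<theta> = tan \<theta>"

fun in_chart :: "proj_circle \<Rightarrow> real \<Rightarrow> bool" where
  "in_chart CircA \<theta> = (cos (\<theta> / 2) \<noteq> 0)"
| "in_chart CircB \<theta> = (cos \<theta> \<noteq> 0)"

fun Psi :: "proj_circle \<Rightarrow> real \<Rightarrow> real" where
  "Psi CircA t = 2 * arctan (t / 2)"
| "Psi CircB t = arctan t"

definition Psi_at :: "proj_circle \<Rightarrow> real \<Rightarrow> real \<Rightarrow> real" where
  "Psi_at S \<theta>0 t = Psi S t + (\<theta>0 - Psi S (Phi S \<theta>0))"

text \<open>Coefficient of lambda = Phi^* dt, i.e. lambda = lam S theta d theta.\<close>
definition lam :: "proj_circle \<Rightarrow> real \<Rightarrow> real" where
  "lam S \<theta> = deriv (Phi S) \<theta>"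

definition schwarzian :: "(real \<Rightarrow> real) \<Rightarrow> real \<Rightarrow> real" where
  "schwarzian g t = (deriv ^^ 3) g t / deriv g t
      - 3 / 2 * ((deriv ^^ 2) g t / deriv g t) ^ 2"

text \<open>For a lift phi of a diffeomorphism of the circle, the induced map tilde-phi of RP1,
  written in the affine chart near Phi theta0: tilde-phi o Phi = Phi o phi.\<close>
definition tilde_map :: "proj_circle \<Rightarrow> (real \<Rightarrow> real) \<Rightarrow> real \<Rightarrow> real \<Rightarrow> real" where
  "tilde_map S \<phi> \<theta>0 t = Phi S (\<phi> (Psi_at S \<theta>0 t))"

text \<open>Coefficient of the quadratic differential bold-S(phi) = Phi^* S(tilde phi) at theta
  (w.r.t. d theta^2), computed in the affine chart.\<close>
definition Sch_coef :: "proj_circle \<Rightarrow> (real \<Rightarrow> real) \<Rightarrow> real \<Rightarrow> real" where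
  "Sch_coef S \<phi> \<theta> = schwarzian (tilde_map S \<phi> \<theta>) (Phi S \<theta>) * (lam S \<theta>) ^ 2"

text \<open>Div xi = (L_xi lambda)/lambda for xi = f d/dtheta.\<close>
definition Div :: "proj_circle \<Rightarrow> (real \<Rightarrow> real) \<Rightarrow> real \<Rightarrow> real" where
  "Div S f \<theta> = (f \<theta> * deriv (lam S) \<theta> + lam S \<theta> * deriv f \<theta>) / lam S \<theta>"

text \<open>Coefficient of lambda d(d Div xi / lambda) w.r.t. d theta^2.\<close>
definition s_formula :: "proj_circle \<Rightarrow> (real \<Rightarrow> real) \<Rightarrow> real \<Rightarrow> real" where
  "s_formula S f \<theta> = lam S \<theta> * deriv (\<lambda>x. deriv (Div S f) x / lam S x) \<theta>"

text \<open>g_1 = G(theta1,theta2) d theta1 d theta2, the pullback of 4 dt1 dt2/(t1-t2)^2.\<close>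
definition G1 :: "proj_circle \<Rightarrow> real \<Rightarrow> real \<Rightarrow> real" where
  "G1 S a b = 4 * lam S a * lam S b / (Phi S a - Phi S b) ^ 2"

text \<open>Coefficient of L_xi g_1 (Lie derivative along xi + xi) w.r.t. d theta1 d theta2.\<close>
definition LG1 :: "proj_circle \<Rightarrow> (real \<Rightarrow> real) \<Rightarrow> real \<times> real \<Rightarrow> real" where
  "LG1 S f p = (case p of (a, b) \<Rightarrow>
      f a * deriv (\<lambda>x. G1 S x b) a + f b * deriv (\<lambda>y. G1 S a y) b
      + G1 S a b * (deriv f a + deriv f b))"

text \<open>Complement of the diagonal of S x S, lifted to R x R.\<close>
definition off_diag :: "proj_circle \<Rightarrow> (real \<times> real) set" where
  "off_diag S = {(a, b). \<forall>k::int. a - b \<noteq> of_int k * period S}"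

definition smooth_vf :: "proj_circle \<Rightarrow> (real \<Rightarrow> real) \<Rightarrow> bool" where
  "smooth_vf S f \<longleftrightarrow> (\<forall>n x. (deriv ^^ n) f differentiable (at x))
      \<and> (\<forall>x. f (x + period S) = f x)"

definition is_flow :: "(real \<Rightarrow> real) \<Rightarrow> (real \<Rightarrow> real \<Rightarrow> real) \<Rightarrow> bool" where
  "is_flow f \<phi> \<longleftrightarrow> (\<forall>\<theta>. \<phi> 0 \<theta> = \<theta>)
      \<and> (\<forall>s \<theta>. ((\<lambda>r. \<phi> r \<theta>) has_real_derivative f (\<phi> s \<theta>)) (at s))"

end

(*
  The lifted flow \<phi>\<^sub>s of \<xi> = f \<partial>\<^sub>\<theta> is smooth in the initial value: the first three
  \<theta>-derivatives of \<phi>\<^sub>s solve the variational equations, whose solutions are written down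
  by variation of constants, and an estimate of Gronwall type, uniform in the time, shows
  that these solutions are indeed the derivatives.

  In the affine chart the developing map is k tan (\<theta> / k) with k = 2 or k = 1, a map of
  constant Schwarzian 2 / k\<^sup>2. By the Cayley chain rule the coefficient of the Schwarzian of
  \<phi>\<^sub>s is (2 / k\<^sup>2) (\<partial>\<^sub>\<theta>\<phi>\<^sub>s)\<^sup>2 + S(\<phi>\<^sub>s) up to an additive constant, whose derivative
  at s = 0 is f''' + (4 / k\<^sup>2) f'; a direct computation gives the same value for
  \<lambda> d(d Div \<xi> / \<lambda>).

  In the angle coordinates g\<^sub>1 = 4 / (k\<^sup>2 sin\<^sup>2 ((\<theta>\<^sub>1 - \<theta>\<^sub>2) / k)) d\<theta>\<^sub>1 d\<theta>\<^sub>2. Expanding the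
  kernel as 4 / z\<^sup>2 + 4 / (3 k\<^sup>2) + o(1) and f by Taylor's formula, the coefficient of
  L\<^sub>\<xi> g\<^sub>1 tends to (2/3) f''' + (8 / (3 k\<^sup>2)) f' at the diagonal.
*)

theory Submission
  imports Defs "HOL-Real_Asymp.Real_Asymp" "HOL-Library.Periodic_Fun"
begin

definition primitive :: "(real \<Rightarrow> real) \<Rightarrow> real \<Rightarrow> real" where
  "primitive g r = integral {0..r} g - integral {r..0} g"

lemma primitive_0 [simp]: "primitive g 0 = 0"
  by (simp add: primitive_def)

lemma has_real_derivative_primitive:
  assumes "continuous_on UNIV g"
  shows "(primitive g has_real_derivative g r) (at r)"
proof -
  define a where "a = -\<bar>r\<bar> - 1"
  define b where "b = \<bar>r\<bar> + 1"
  have ab: "a < r" "r < b" "a < 0" "0 < b" by (auto simp: a_def b_def)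
  have cont: "continuous_on {a..b} g" using assms continuous_on_subset by blast
  have eq: "primitive g u = integral {a..u} g - integral {a..0} g" if "u \<in> {a<..<b}" for u
  proof (cases "0 \<le> u")
    case True
    have "integral {a..0} g + integral {0..u} g = integral {a..u} g"
      using ab True that
      by (intro Henstock_Kurzweil_Integration.integral_combine)
         (auto intro!: integrable_continuous_real continuous_on_subset[OF cont])
    moreover have "integral {u..0} g = 0" using True by (cases "u = 0") auto
    ultimately show ?thesis by (simp add: primitive_def)
  next
    case False
    have "integral {a..u} g + integral {u..0} g = integral {a..0} g"
      using ab False that
      by (intro Henstock_Kurzweil_Integration.integral_combine)
         (auto intro!: integrable_continuous_real continuous_on_subset[OF cont])
    moreover have "integral {0..u} g = 0" using False by auto
    ultimately show ?thesis by (simp add: primitive_def)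
  qed
  have "((\<lambda>u. integral {a..u} g - integral {a..0} g) has_real_derivative g r) (at r within {a..b})"
    using integral_has_real_derivative[OF cont, of r] ab by (auto intro!: derivative_eq_intros)
  then have "((\<lambda>u. integral {a..u} g - integral {a..0} g) has_real_derivative g r) (at r)"
    using ab by (subst (asm) at_within_interior) auto
  then show ?thesis
    by (rule has_field_derivative_transform_within_open[where S="{a<..<b}"]) (use ab eq in auto)
qed

lemma has_real_derivative_imp_continuous_on:
  "(\<And>r. (g has_real_derivative g' r) (at r)) \<Longrightarrow> continuous_on S g"
  by (meson DERIV_isCont continuous_at_imp_continuous_on)

lemma bounded_image_Icc: "continuous_on UNIV g \<Longrightarrow> bounded (g ` {a..b::real})"
  by (rule compact_imp_bounded[OF compact_continuous_image[OF continuous_on_subset compact_Icc]]) auto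

lemma taylor2_remainder_bound:
  fixes g g' g'' :: "real \<Rightarrow> real"
  assumes g': "\<And>t. (g has_real_derivative g' t) (at t)"
    and g'': "\<And>t. (g' has_real_derivative g'' t) (at t)"
    and L: "\<And>t. \<bar>g'' t\<bar> \<le> L"
  shows "\<bar>g b - g a - g' a * (b - a)\<bar> \<le> L * (b - a)\<^sup>2"
proof -
  define k where "k t = g t - g a - g' a * (t - a)" for t
  have dk: "(k has_real_derivative (g' t - g' a)) (at t within closed_segment a b)" for t
    unfolding k_def by (rule has_field_derivative_at_within) (auto intro!: derivative_eq_intros g')
  have lip: "\<bar>g' t - g' a\<bar> \<le> L * \<bar>t - a\<bar>" for t
    using field_differentiable_bound[of UNIV g' g'' L t a] g'' L by auto
  have "\<bar>g' t - g' a\<bar> \<le> L * \<bar>b - a\<bar>" if "t \<in> closed_segment a b" for t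
  proof -
    have "\<bar>t - a\<bar> \<le> \<bar>b - a\<bar>" using that
      by (auto simp: closed_segment_eq_real_ivl split: if_splits)
    moreover have "L \<ge> 0" using L[of 0] by linarith
    ultimately show ?thesis using lip[of t] by (meson mult_left_mono order_trans)
  qed
  then have "norm (k b - k a) \<le> (L * \<bar>b - a\<bar>) * norm (b - a)"
    by (intro field_differentiable_bound[where S="closed_segment a b" and f'="\<lambda>t. g' t - g' a"])
       (auto intro: dk)
  then show ?thesis by (simp add: k_def power2_eq_square abs_mult mult.assoc)
qed

lemma gronwall_square_bound:
  fixes u u' :: "real \<Rightarrow> real"
  assumes du: "\<And>t. (u has_real_derivative u' t) (at t)"
    and bound: "\<And>t. \<bar>u' t\<bar> \<le> M * \<bar>u t\<bar>" and r: "r \<ge> 0"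
  shows "u r * u r \<le> u 0 * u 0 * exp (2 * M * r)"
proof -
  define w where "w t = u t * u t * exp (- (2 * M * t))" for t
  have "w r \<le> w 0"
  proof (rule DERIV_nonpos_imp_nonincreasing[OF r])
    fix t
    have "(w has_real_derivative 2 * exp (- (2 * M * t)) * (u t * u' t - M * (u t * u t))) (at t)"
      unfolding w_def by (rule DERIV_cong, (rule derivative_eq_intros du refl)+) (simp add: algebra_simps)
    moreover have "\<bar>u t * u' t\<bar> \<le> M * (u t * u t)"
      using mult_left_mono[OF bound, of "\<bar>u t\<bar>" t]
      by (simp add: abs_mult abs_mult_self_eq mult.left_commute)
    then have "2 * exp (- (2 * M * t)) * (u t * u' t - M * (u t * u t)) \<le> 0"
      by (simp add: mult_nonneg_nonpos abs_le_iff)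
    ultimately show "\<exists>y. (w has_real_derivative y) (at t) \<and> y \<le> 0" by blast
  qed
  then show ?thesis by (simp add: w_def exp_minus field_simps)
qed

lemma gronwall_abs_bound:
  fixes u u' :: "real \<Rightarrow> real"
  assumes du: "\<And>t. (u has_real_derivative u' t) (at t)"
    and bound: "\<And>t. \<bar>u' t\<bar> \<le> M * \<bar>u t\<bar>"
  shows "\<bar>u r\<bar> \<le> \<bar>u 0\<bar> * exp (M * \<bar>r\<bar>)"
proof -
  have "u r * u r \<le> u 0 * u 0 * exp (2 * M * \<bar>r\<bar>)"
  proof (cases "r \<ge> 0")
    case True
    then show ?thesis using gronwall_square_bound[OF du bound] by simp
  next
    case False
    have "((\<lambda>t. u (- t)) has_real_derivative - u' (- t)) (at t)" for t
      using du[of "- t"] by (simp add: DERIV_mirror)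
    from gronwall_square_bound[OF this, of M "- r"] False bound
    show ?thesis by simp
  qed
  moreover have "(\<bar>u 0\<bar> * exp (M * \<bar>r\<bar>))\<^sup>2 = u 0 * u 0 * exp (2 * M * \<bar>r\<bar>)"
    by (simp add: power2_eq_square exp_add[symmetric] algebra_simps)
  ultimately have "(u r)\<^sup>2 \<le> (\<bar>u 0\<bar> * exp (M * \<bar>r\<bar>))\<^sup>2"
    by (simp add: power2_eq_square)
  then show ?thesis using abs_le_square_iff[of "u r" "\<bar>u 0\<bar> * exp (M * \<bar>r\<bar>)"] by simp
qed

section \<open>Differentiability in a parameter, uniformly in time\<close>

definition unif_has_deriv ::
    "real set \<Rightarrow> (real \<Rightarrow> real \<Rightarrow> real) \<Rightarrow> (real \<Rightarrow> real \<Rightarrow> real) \<Rightarrow> real \<Rightarrow> bool" where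
  "unif_has_deriv I E E' x \<longleftrightarrow>
     uniform_limit I (\<lambda>h r. (E r (x + h) - E r x) / h) (\<lambda>r. E' r x) (at 0)"

lemma unif_has_deriv_imp_has_real_derivative:
  assumes "unif_has_deriv I E E' x" "r \<in> I"
  shows "(E r has_real_derivative E' r x) (at x)"
  using tendsto_uniform_limitI[OF assms(1)[unfolded unif_has_deriv_def] assms(2)]
  by (simp add: DERIV_def)

lemma unif_has_deriv_zero: "unif_has_deriv I (\<lambda>r y. 0) (\<lambda>r y. 0) x"
  by (simp add: unif_has_deriv_def uniform_limit_const)

lemma tendsto_imp_uniform_limit:
  "(g \<longlongrightarrow> l) F \<Longrightarrow> uniform_limit I (\<lambda>h r. g h) (\<lambda>r. l) F"
  by (auto intro!: uniform_limitI dest: tendstoD)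

lemma eventually_at_0_nonzero: "\<forall>\<^sub>F h in at (0::real). h \<noteq> 0"
  by (simp add: eventually_at_filter)

lemma unif_has_deriv_imp_lipschitz:
  assumes E: "unif_has_deriv I E E' x" and bounded: "bounded ((\<lambda>r. E' r x) ` I)"
  obtains C where "\<forall>\<^sub>F h in at 0. \<forall>r\<in>I. \<bar>E r (x + h) - E r x\<bar> \<le> C * \<bar>h\<bar>"
proof -
  obtain B where B: "\<And>r. r \<in> I \<Longrightarrow> \<bar>E' r x\<bar> \<le> B"
    using bounded by (auto simp: bounded_iff)
  have "\<forall>\<^sub>F h in at 0. \<forall>r\<in>I. dist ((E r (x + h) - E r x) / h) (E' r x) < 1"
    using uniform_limitD[OF E[unfolded unif_has_deriv_def], of 1] by simp
  then have "\<forall>\<^sub>F h in at 0. \<forall>r\<in>I. \<bar>E r (x + h) - E r x\<bar> \<le> (B + 1) * \<bar>h\<bar>"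
    using eventually_at_0_nonzero
  proof eventually_elim
    case (elim h)
    show ?case
    proof
      fix r assume r: "r \<in> I"
      have "\<bar>(E r (x + h) - E r x) / h\<bar> \<le> B + 1"
        using elim(1) r B[OF r] by (auto simp: dist_real_def)
      then show "\<bar>E r (x + h) - E r x\<bar> \<le> (B + 1) * \<bar>h\<bar>"
        using elim(2) by (simp add: abs_divide divide_le_eq)
    qed
  qed
  then show ?thesis by (rule that)
qed

lemma unif_has_deriv_imp_uniform_limit:
  assumes E: "unif_has_deriv I E E' x" and bounded: "bounded ((\<lambda>r. E' r x) ` I)"
  shows "uniform_limit I (\<lambda>h r. E r (x + h)) (\<lambda>r. E r x) (at 0)"
proof -
  obtain C where C: "\<forall>\<^sub>F h in at 0. \<forall>r\<in>I. \<bar>E r (x + h) - E r x\<bar> \<le> C * \<bar>h\<bar>"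
    using unif_has_deriv_imp_lipschitz[OF E bounded] .
  have "((\<lambda>h. C * \<bar>h\<bar>) \<longlongrightarrow> C * \<bar>0\<bar>) (at (0::real))"
    by (intro tendsto_intros)
  then have "uniform_limit I (\<lambda>h r. C * \<bar>h\<bar>) (\<lambda>r. 0) (at 0)"
    by (simp add: tendsto_imp_uniform_limit)
  then show ?thesis
    by (rule metric_uniform_limit_imp_uniform_limit)
       (use C in \<open>auto simp: dist_real_def elim!: eventually_mono\<close>)
qed

lemma unif_has_deriv_mult:
  assumes E: "unif_has_deriv I E E' x" and G: "unif_has_deriv I G G' x"
    and "bounded ((\<lambda>r. E r x) ` I)" "bounded ((\<lambda>r. E' r x) ` I)"
    and "bounded ((\<lambda>r. G r x) ` I)" "bounded ((\<lambda>r. G' r x) ` I)"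
  shows "unif_has_deriv I (\<lambda>r y. E r y * G r y) (\<lambda>r y. E' r y * G r y + E r y * G' r y) x"
proof -
  have "uniform_limit I
      (\<lambda>h r. (E r (x + h) - E r x) / h * G r (x + h) + E r x * ((G r (x + h) - G r x) / h))
      (\<lambda>r. E' r x * G r x + E r x * G' r x) (at 0)"
    using assms unfolding unif_has_deriv_def
    by (intro uniform_limit_add uniform_lim_mult uniform_limit_const
        unif_has_deriv_imp_uniform_limit[OF G]) auto
  moreover have "(E r (x + h) * G r (x + h) - E r x * G r x) / h
      = (E r (x + h) - E r x) / h * G r (x + h) + E r x * ((G r (x + h) - G r x) / h)" for h r
    by (simp add: diff_divide_distrib algebra_simps)
  ultimately show ?thesis
    unfolding unif_has_deriv_def by simp
qed

lemma uniform_limit_taylor2_remainder: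
  assumes g': "\<And>t. (g has_real_derivative g' t) (at t)"
    and g'': "\<And>t. (g' has_real_derivative g'' t) (at t)" and L: "\<And>t. \<bar>g'' t\<bar> \<le> L"
    and lip: "\<forall>\<^sub>F h in at 0. \<forall>r\<in>I. \<bar>E r (x + h) - E r x\<bar> \<le> C * \<bar>h\<bar>"
  shows "uniform_limit I
    (\<lambda>h r. (g (E r (x + h)) - g (E r x) - g' (E r x) * (E r (x + h) - E r x)) / h) (\<lambda>r. 0) (at 0)"
proof -
  have L0: "L \<ge> 0" using L[of 0] by linarith
  have "((\<lambda>h. L * C\<^sup>2 * \<bar>h\<bar>) \<longlongrightarrow> L * C\<^sup>2 * \<bar>0\<bar>) (at (0::real))"
    by (intro tendsto_intros)
  then have "uniform_limit I (\<lambda>h r. L * C\<^sup>2 * \<bar>h\<bar>) (\<lambda>r. 0) (at 0)"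
    by (simp add: tendsto_imp_uniform_limit)
  moreover have "\<forall>\<^sub>F h in at 0. \<forall>r\<in>I.
      \<bar>(g (E r (x + h)) - g (E r x) - g' (E r x) * (E r (x + h) - E r x)) / h\<bar> \<le> L * C\<^sup>2 * \<bar>h\<bar>"
    using lip
  proof eventually_elim
    case (elim h)
    show ?case
    proof
      fix r assume r: "r \<in> I"
      have "(E r (x + h) - E r x)\<^sup>2 \<le> (C * \<bar>h\<bar>)\<^sup>2"
        using elim r by (metis abs_ge_zero power2_abs power_mono)
      then have "\<bar>g (E r (x + h)) - g (E r x) - g' (E r x) * (E r (x + h) - E r x)\<bar>
          \<le> L * (C * \<bar>h\<bar>)\<^sup>2"
        using taylor2_remainder_bound[OF g' g'' L, where a="E r x" and b="E r (x + h)"] L0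
        by (meson mult_left_mono order_trans)
      then show "\<bar>(g (E r (x + h)) - g (E r x) - g' (E r x) * (E r (x + h) - E r x)) / h\<bar>
          \<le> L * C\<^sup>2 * \<bar>h\<bar>"
        by (cases "h = 0") (auto simp: abs_divide divide_le_eq power2_eq_square mult_ac)
    qed
  qed
  ultimately show ?thesis
    by (rule metric_uniform_limit_imp_uniform_limit[OF _ eventually_mono])
       (auto simp: dist_real_def)
qed

lemma unif_has_deriv_compose:
  assumes E: "unif_has_deriv I E E' x" and bounded: "bounded ((\<lambda>r. E' r x) ` I)"
    and g': "\<And>t. (g has_real_derivative g' t) (at t)"
    and g'': "\<And>t. (g' has_real_derivative g'' t) (at t)"
    and L1: "\<And>t. \<bar>g' t\<bar> \<le> L1" and L2: "\<And>t. \<bar>g'' t\<bar> \<le> L2"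
  shows "unif_has_deriv I (\<lambda>r y. g (E r y)) (\<lambda>r y. g' (E r y) * E' r y) x"
proof -
  obtain C where C: "\<forall>\<^sub>F h in at 0. \<forall>r\<in>I. \<bar>E r (x + h) - E r x\<bar> \<le> C * \<bar>h\<bar>"
    using unif_has_deriv_imp_lipschitz[OF E bounded] .
  have "bounded ((\<lambda>r. g' (E r x)) ` I)"
    using L1 by (auto simp: bounded_iff)
  then have "uniform_limit I
      (\<lambda>h r. g' (E r x) * ((E r (x + h) - E r x) / h)
        + (g (E r (x + h)) - g (E r x) - g' (E r x) * (E r (x + h) - E r x)) / h)
      (\<lambda>r. g' (E r x) * E' r x + 0) (at 0)"
    using E bounded unfolding unif_has_deriv_def
    by (intro uniform_limit_add uniform_lim_mult uniform_limit_const
        uniform_limit_taylor2_remainder[OF g' g'' L2 C])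
  moreover have "(g (E r (x + h)) - g (E r x)) / h
      = g' (E r x) * ((E r (x + h) - E r x) / h)
        + (g (E r (x + h)) - g (E r x) - g' (E r x) * (E r (x + h) - E r x)) / h" for h r
    by (cases "h = 0") (simp_all add: field_simps)
  ultimately show ?thesis
    unfolding unif_has_deriv_def by simp
qed

lemma uniform_limit_from_time_derivative:
  assumes dE: "\<And>r y. ((\<lambda>r. E r y) has_real_derivative Q r y) (at r)"
    and E0: "\<And>y. E 0 y = E 0 x"
    and Q: "uniform_limit {-T..T} (\<lambda>h r. Q r (x + h)) (\<lambda>r. Q r x) (at 0)"
  shows "uniform_limit {-T..T} (\<lambda>h r. E r (x + h)) (\<lambda>r. E r x) (at 0)"
proof (rule uniform_limitI)
  fix e :: real assume e: "e > 0"
  have "\<forall>\<^sub>F h in at 0. \<forall>r\<in>{-T..T}. dist (Q r (x + h)) (Q r x) < e / (\<bar>T\<bar> + 1)"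
    using e by (intro uniform_limitD[OF Q]) auto
  then show "\<forall>\<^sub>F h in at 0. \<forall>r\<in>{-T..T}. dist (E r (x + h)) (E r x) < e"
  proof eventually_elim
    case (elim h)
    show ?case
    proof
      fix r assume r: "r \<in> {-T..T}"
      have deriv: "((\<lambda>r. E r (x + h) - E r x) has_real_derivative Q t (x + h) - Q t x)
          (at t within {-T..T})" for t
        by (rule has_field_derivative_at_within) (rule DERIV_diff[OF dE dE])
      have bound: "norm (Q t (x + h) - Q t x) \<le> e / (\<bar>T\<bar> + 1)" if "t \<in> {-T..T}" for t
      proof -
        have "dist (Q t (x + h)) (Q t x) < e / (\<bar>T\<bar> + 1)" using elim that by blast
        then show ?thesis by (simp add: dist_real_def)
      qed
      have "norm ((E r (x + h) - E r x) - (E 0 (x + h) - E 0 x)) \<le> e / (\<bar>T\<bar> + 1) * norm (r - 0)"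
        by (rule field_differentiable_bound[OF convex_real_interval(5) deriv bound]) (use r in auto)
      then have "\<bar>E r (x + h) - E r x\<bar> \<le> e / (\<bar>T\<bar> + 1) * \<bar>r\<bar>" using E0[of "x + h"] by simp
      also have "\<dots> < e / (\<bar>T\<bar> + 1) * (\<bar>T\<bar> + 1)"
        using r e by (intro mult_strict_left_mono) auto
      also have "\<dots> = e" by simp
      finally show "dist (E r (x + h)) (E r x) < e" by (simp add: dist_real_def)
    qed
  qed
qed

text \<open>Variation of constants: \<open>z / W\<close> has derivative \<open>R / W\<close>.\<close>

lemma linear_ode_error_bound:
  assumes dz: "\<And>t. (z has_real_derivative a t * z t + R t) (at t)"
    and dW: "\<And>t. (W has_real_derivative a t * W t) (at t)" and W: "\<And>t. W t > 0"
    and z0: "z 0 = 0" and R: "\<And>t. t \<in> {-T..T} \<Longrightarrow> \<bar>R t\<bar> \<le> \<eta>"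
    and w0: "w0 > 0" "\<And>t. t \<in> {-T..T} \<Longrightarrow> w0 \<le> W t" and r: "r \<in> {-T..T}"
  shows "\<bar>z r\<bar> \<le> W r * (\<eta> * \<bar>r\<bar> / w0)"
proof -
  have deriv: "((\<lambda>t. z t / W t) has_real_derivative R t / W t) (at t within {-T..T})" for t
  proof -
    have "(a t * z t + R t) * W t - z t * (a t * W t) = R t * W t"
      by (simp add: algebra_simps)
    then have "((a t * z t + R t) * W t - z t * (a t * W t)) / (W t * W t) = R t / W t"
      using W[of t] by simp
    then have "((\<lambda>t. z t / W t) has_real_derivative R t / W t) (at t)"
      using DERIV_divide[OF dz dW, of t] W[of t] by simp
    then show ?thesis by (rule has_field_derivative_at_within)
  qed
  have bound: "norm (R t / W t) \<le> \<eta> / w0" if t: "t \<in> {-T..T}" for t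
  proof -
    have "0 \<le> \<eta>" using R[OF t] abs_ge_zero order_trans by blast
    then have "\<bar>R t\<bar> / W t \<le> \<eta> / w0"
      using R[OF t] w0(1) w0(2)[OF t] by (rule frac_le)
    then show ?thesis using W[of t] by (simp add: abs_divide)
  qed
  have "norm (z r / W r - z 0 / W 0) \<le> \<eta> / w0 * norm (r - 0)"
    by (rule field_differentiable_bound[OF convex_real_interval(5) deriv bound]) (use r in auto)
  then have "\<bar>z r\<bar> / W r \<le> \<eta> / w0 * \<bar>r\<bar>"
    using W[of r] z0 by (simp add: abs_divide)
  then have "\<bar>z r\<bar> \<le> \<eta> / w0 * \<bar>r\<bar> * W r"
    by (simp only: pos_divide_le_eq[OF W[of r]])
  then show ?thesis
    by (simp add: mult_ac)
qed

text \<open>In the next two lemmas \<open>E' r x\<close> solves the linearisation along \<open>E r x\<close> of the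
  equation \<open>\<partial>\<^sub>r E = P\<close>, with coefficient \<open>a\<close> and inhomogeneity \<open>c\<close>, and \<open>W\<close> is a positive
  solution of the homogeneous linearised equation.\<close>

lemma ode_difference_quotient_error:
  fixes E E' P :: "real \<Rightarrow> real \<Rightarrow> real" and a c W :: "real \<Rightarrow> real"
  assumes dE: "\<And>r y. ((\<lambda>r. E r y) has_real_derivative P r y) (at r)"
    and dE': "\<And>r. ((\<lambda>r. E' r x) has_real_derivative a r * E' r x + c r) (at r)"
    and dW: "\<And>r. (W has_real_derivative a r * W r) (at r)" and W: "\<And>r. W r > 0"
    and init: "\<And>y. E 0 y - E 0 x = (y - x) * E' 0 x" and h: "h \<noteq> 0"
    and remainder: "\<And>t. t \<in> {-T..T} \<Longrightarrow>
      \<bar>(P t (x + h) - P t x) / h - a t * ((E t (x + h) - E t x) / h) - c t\<bar> \<le> \<eta>"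
    and w0: "w0 > 0" "\<And>t. t \<in> {-T..T} \<Longrightarrow> w0 \<le> W t" and r: "r \<in> {-T..T}"
  shows "\<bar>(E r (x + h) - E r x) / h - E' r x\<bar> \<le> W r * (\<eta> * \<bar>r\<bar> / w0)"
proof -
  define z where "z t = E t (x + h) - E t x - h * E' t x" for t
  define R where "R t = h * ((P t (x + h) - P t x) / h - a t * ((E t (x + h) - E t x) / h) - c t)" for t
  have dz: "(z has_real_derivative a t * z t + R t) (at t)" for t
    unfolding z_def
    by (rule DERIV_cong[OF DERIV_diff[OF DERIV_diff[OF dE dE] DERIV_cmult[OF dE']]])
       (use h in \<open>simp add: R_def field_simps\<close>)
  have "\<bar>R t\<bar> \<le> \<bar>h\<bar> * \<eta>" if "t \<in> {-T..T}" for t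
    unfolding R_def abs_mult by (rule mult_left_mono[OF remainder[OF that]]) simp
  then have "\<bar>z r\<bar> \<le> W r * (\<bar>h\<bar> * \<eta> * \<bar>r\<bar> / w0)"
    by (intro linear_ode_error_bound[OF dz dW W _ _ w0 r]) (auto simp: z_def init)
  also have "\<dots> = \<bar>h\<bar> * (W r * (\<eta> * \<bar>r\<bar> / w0))"
    using w0(1) by (simp add: field_simps)
  also have "\<bar>z r\<bar> = \<bar>h\<bar> * \<bar>(E r (x + h) - E r x) / h - E' r x\<bar>"
    using h by (simp add: z_def abs_mult[symmetric] field_simps)
  finally have "\<bar>h\<bar> * \<bar>(E r (x + h) - E r x) / h - E' r x\<bar> \<le> \<bar>h\<bar> * (W r * (\<eta> * \<bar>r\<bar> / w0))" .
  then show ?thesis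
    by (rule mult_left_le_imp_le) (use h in simp)
qed

lemma unif_has_deriv_of_ode:
  fixes E E' P :: "real \<Rightarrow> real \<Rightarrow> real" and a c W :: "real \<Rightarrow> real"
  assumes dE: "\<And>r y. ((\<lambda>r. E r y) has_real_derivative P r y) (at r)"
    and dE': "\<And>r. ((\<lambda>r. E' r x) has_real_derivative a r * E' r x + c r) (at r)"
    and dW: "\<And>r. (W has_real_derivative a r * W r) (at r)" and W: "\<And>r. W r > 0"
    and init: "\<And>y. E 0 y - E 0 x = (y - x) * E' 0 x"
    and remainder: "uniform_limit {-T..T}
      (\<lambda>h r. (P r (x + h) - P r x) / h - a r * ((E r (x + h) - E r x) / h)) c (at 0)"
  shows "unif_has_deriv {-T..T} E E' x"
  unfolding unif_has_deriv_def
proof (rule uniform_limitI)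
  fix e :: real assume e: "e > 0"
  show "\<forall>\<^sub>F h in at 0. \<forall>r\<in>{-T..T}. dist ((E r (x + h) - E r x) / h) (E' r x) < e"
  proof (cases "T \<ge> 0")
    case T: True
    have cW: "continuous_on {-T..T} W" by (rule has_real_derivative_imp_continuous_on[OF dW])
    obtain r0 where r0: "r0 \<in> {-T..T}" "\<And>r. r \<in> {-T..T} \<Longrightarrow> W r0 \<le> W r"
      using continuous_attains_inf[OF compact_Icc _ cW] T by auto
    obtain r1 where r1: "r1 \<in> {-T..T}" "\<And>r. r \<in> {-T..T} \<Longrightarrow> W r \<le> W r1"
      using continuous_attains_sup[OF compact_Icc _ cW] T by auto
    define \<eta> where "\<eta> = e * W r0 / (2 * W r1 * (T + 1))"
    have \<eta>: "\<eta> > 0" using e W[of r0] W[of r1] T by (simp add: \<eta>_def)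
    have "\<forall>\<^sub>F h in at 0. \<forall>r\<in>{-T..T}.
        dist ((P r (x + h) - P r x) / h - a r * ((E r (x + h) - E r x) / h)) (c r) < \<eta>"
      by (rule uniform_limitD[OF remainder \<eta>])
    then show ?thesis
      using eventually_at_0_nonzero
    proof eventually_elim
      case (elim h)
      show ?case
      proof
        fix r assume r: "r \<in> {-T..T}"
        have "\<bar>(E r (x + h) - E r x) / h - E' r x\<bar> \<le> W r * (\<eta> * \<bar>r\<bar> / W r0)"
          by (rule ode_difference_quotient_error[where E=E and E'=E' and P=P and a=a and c=c and W=W,
                OF dE dE' dW W init elim(2) _ W r0(2) r])
             (use elim(1) in \<open>fastforce simp: dist_real_def\<close>)
        also have "\<dots> \<le> W r1 * (\<eta> * (T + 1) / W r0)"
          by (rule mult_mono[OF r1(2)[OF r] divide_right_mono[OF mult_left_mono]])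
             (use r W[of r] W[of r0] W[of r1] \<eta> in auto)
        also have "\<dots> = e / 2"
          using W[of r0] W[of r1] T by (simp add: \<eta>_def)
        finally show "dist ((E r (x + h) - E r x) / h) (E' r x) < e"
          using e by (simp add: dist_real_def)
      qed
    qed
  qed simp
qed

lemma unif_has_deriv_linear_ode:
  fixes E E' a a' b b' :: "real \<Rightarrow> real \<Rightarrow> real" and W :: "real \<Rightarrow> real"
  assumes dE: "\<And>r y. ((\<lambda>r. E r y) has_real_derivative a r y * E r y + b r y) (at r)"
    and dE': "\<And>r. ((\<lambda>r. E' r x) has_real_derivative a r x * E' r x + (a' r x * E r x + b' r x)) (at r)"
    and dW: "\<And>r. (W has_real_derivative a r x * W r) (at r)" and W: "\<And>r. W r > 0"
    and E0: "\<And>y. E 0 y = E 0 x" and E'0: "E' 0 x = 0"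
    and a: "unif_has_deriv {-T..T} a a' x" and b: "unif_has_deriv {-T..T} b b' x"
    and E: "uniform_limit {-T..T} (\<lambda>h r. E r (x + h)) (\<lambda>r. E r x) (at 0)"
    and bounded: "bounded ((\<lambda>r. a' r x) ` {-T..T})" "bounded ((\<lambda>r. E r x) ` {-T..T})"
  shows "unif_has_deriv {-T..T} E E' x"
proof (rule unif_has_deriv_of_ode[where E=E and E'=E' and x=x and W=W and T=T
      and P="\<lambda>r y. a r y * E r y + b r y" and a="\<lambda>r. a r x"
      and c="\<lambda>r. a' r x * E r x + b' r x", OF dE dE' dW W])
  show "E 0 y - E 0 x = (y - x) * E' 0 x" for y using E0[of y] E'0 by simp
  have "uniform_limit {-T..T} (\<lambda>h r. (a r (x + h) - a r x) / h * E r (x + h) + (b r (x + h) - b r x) / h)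
      (\<lambda>r. a' r x * E r x + b' r x) (at 0)"
    using a b unfolding unif_has_deriv_def
    by (intro uniform_limit_add uniform_lim_mult[OF _ E bounded])
  moreover have "(a r (x + h) * E r (x + h) + b r (x + h) - (a r x * E r x + b r x)) / h
        - a r x * ((E r (x + h) - E r x) / h)
      = (a r (x + h) - a r x) / h * E r (x + h) + (b r (x + h) - b r x) / h" for h r
    by (cases "h = 0") (simp_all add: field_simps)
  ultimately show "uniform_limit {-T..T} (\<lambda>h r. (a r (x + h) * E r (x + h) + b r (x + h)
        - (a r x * E r x + b r x)) / h - a r x * ((E r (x + h) - E r x) / h))
      (\<lambda>r. a' r x * E r x + b' r x) (at 0)"
    by simp
qed

section \<open>Smooth dependence of a flow on the initial value\<close>

locale bounded_smooth_flow =
  fixes f :: "real \<Rightarrow> real" and \<phi> :: "real \<Rightarrow> real \<Rightarrow> real"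
  assumes differentiable_deriv_f: "\<And>n x. (deriv ^^ n) f differentiable (at x)"
    and bounded_deriv_f: "\<And>n. \<exists>M. \<forall>z. \<bar>(deriv ^^ n) f z\<bar> \<le> M"
    and flow_0: "\<And>y. \<phi> 0 y = y"
    and flow_has_derivative: "\<And>r y. ((\<lambda>r. \<phi> r y) has_real_derivative f (\<phi> r y)) (at r)"
begin

definition f_deriv :: "nat \<Rightarrow> real \<Rightarrow> real" where
  "f_deriv n = (deriv ^^ n) f"

lemma has_real_derivative_f_deriv: "(f_deriv n has_real_derivative f_deriv (Suc n) t) (at t)"
  unfolding f_deriv_def using differentiable_deriv_f[of n t]
  by (simp add: DERIV_deriv_iff_real_differentiable)

lemma has_real_derivative_f_deriv_numeral:
  "(f has_real_derivative f_deriv 1 t) (at t)"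
  "(f_deriv 1 has_real_derivative f_deriv 2 t) (at t)"
  using has_real_derivative_f_deriv[of 0 t] has_real_derivative_f_deriv[of 1 t]
  by (simp_all add: f_deriv_def eval_nat_numeral)

definition f_deriv_bound :: "nat \<Rightarrow> real" where
  "f_deriv_bound n = (SOME M. \<forall>z. \<bar>f_deriv n z\<bar> \<le> M)"

lemma abs_f_deriv_le: "\<bar>f_deriv n z\<bar> \<le> f_deriv_bound n"
  using someI_ex[OF bounded_deriv_f[of n]] unfolding f_deriv_bound_def f_deriv_def by blast

lemma f_deriv_lipschitz: "\<bar>f_deriv n a - f_deriv n b\<bar> \<le> f_deriv_bound (Suc n) * \<bar>a - b\<bar>"
  using field_differentiable_bound[of UNIV "f_deriv n" "f_deriv (Suc n)" "f_deriv_bound (Suc n)" a b]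
  by (auto intro: has_field_derivative_at_within has_real_derivative_f_deriv abs_f_deriv_le)

lemma continuous_on_f_deriv [continuous_intros]:
  "continuous_on S g \<Longrightarrow> continuous_on S (\<lambda>x. f_deriv n (g x))"
  by (rule continuous_on_compose2[OF has_real_derivative_imp_continuous_on[OF has_real_derivative_f_deriv]])
     auto

lemma continuous_on_flow [continuous_intros]: "continuous_on S (\<lambda>r. \<phi> r y)"
  by (rule has_real_derivative_imp_continuous_on[OF flow_has_derivative])

lemma flow_lipschitz: "\<bar>\<phi> r y - \<phi> r x\<bar> \<le> \<bar>y - x\<bar> * exp (f_deriv_bound 1 * \<bar>r\<bar>)"
proof -
  have "\<bar>\<phi> r y - \<phi> r x\<bar> \<le> \<bar>\<phi> 0 y - \<phi> 0 x\<bar> * exp (f_deriv_bound 1 * \<bar>r\<bar>)"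
  proof (rule gronwall_abs_bound[where u="\<lambda>t. \<phi> t y - \<phi> t x"])
    show "((\<lambda>t. \<phi> t y - \<phi> t x) has_real_derivative f (\<phi> t y) - f (\<phi> t x)) (at t)" for t
      by (intro DERIV_diff flow_has_derivative)
    show "\<bar>f (\<phi> t y) - f (\<phi> t x)\<bar> \<le> f_deriv_bound 1 * \<bar>\<phi> t y - \<phi> t x\<bar>" for t
      using f_deriv_lipschitz[of 0] by (simp add: f_deriv_def)
  qed
  then show ?thesis by (simp add: flow_0)
qed

text \<open>Solutions, by variation of constants, of the variational equations of
  \<open>\<partial>\<^sub>r \<phi> = f \<circ> \<phi>\<close>: \<open>flow_dx\<close> solves \<open>\<partial>\<^sub>r D = f' (\<phi>) D\<close> with \<open>D = 1\<close> at
  \<open>r = 0\<close>, and \<open>flow_dxx\<close>, \<open>flow_dxxx\<close> solve the inhomogeneous equations for the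
  higher derivatives in the initial value, with zero initial values.\<close>

definition flow_dx :: "real \<Rightarrow> real \<Rightarrow> real" where
  "flow_dx r y = exp (primitive (\<lambda>\<rho>. f_deriv 1 (\<phi> \<rho> y)) r)"

definition flow_dxx :: "real \<Rightarrow> real \<Rightarrow> real" where
  "flow_dxx r y = flow_dx r y * primitive (\<lambda>\<rho>. f_deriv 2 (\<phi> \<rho> y) * flow_dx \<rho> y) r"

definition flow_dxxx :: "real \<Rightarrow> real \<Rightarrow> real" where
  "flow_dxxx r y = flow_dx r y * primitive (\<lambda>\<rho>. f_deriv 3 (\<phi> \<rho> y) * (flow_dx \<rho> y)\<^sup>2
      + 3 * f_deriv 2 (\<phi> \<rho> y) * flow_dxx \<rho> y) r"

lemma flow_dx_pos: "flow_dx r y > 0"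
  by (simp add: flow_dx_def)

lemma flow_derivs_0 [simp]: "flow_dx 0 y = 1" "flow_dxx 0 y = 0" "flow_dxxx 0 y = 0"
  by (simp_all add: flow_dx_def flow_dxx_def flow_dxxx_def)

lemma has_real_derivative_flow_dx:
  "((\<lambda>r. flow_dx r y) has_real_derivative f_deriv 1 (\<phi> r y) * flow_dx r y) (at r)"
  unfolding flow_dx_def
  by (rule DERIV_cong[OF DERIV_fun_exp[OF has_real_derivative_primitive]])
     (auto intro: continuous_intros)

lemma continuous_on_flow_dx [continuous_intros]: "continuous_on S (\<lambda>r. flow_dx r y)"
  by (rule has_real_derivative_imp_continuous_on[OF has_real_derivative_flow_dx])

lemma has_real_derivative_flow_dxx:
  "((\<lambda>r. flow_dxx r y) has_real_derivative
     f_deriv 1 (\<phi> r y) * flow_dxx r y + f_deriv 2 (\<phi> r y) * flow_dx r y * flow_dx r y) (at r)"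
  unfolding flow_dxx_def
  by (rule DERIV_cong[OF DERIV_mult[OF has_real_derivative_flow_dx has_real_derivative_primitive]],
      intro continuous_intros) (simp add: algebra_simps)

lemma continuous_on_flow_dxx [continuous_intros]: "continuous_on S (\<lambda>r. flow_dxx r y)"
  by (rule has_real_derivative_imp_continuous_on[OF has_real_derivative_flow_dxx])

lemma has_real_derivative_flow_dxxx:
  "((\<lambda>r. flow_dxxx r y) has_real_derivative f_deriv 1 (\<phi> r y) * flow_dxxx r y
     + (f_deriv 3 (\<phi> r y) * flow_dx r y ^ 3 + 3 * f_deriv 2 (\<phi> r y) * flow_dx r y * flow_dxx r y))
   (at r)"
  unfolding flow_dxxx_def
  by (rule DERIV_cong[OF DERIV_mult[OF has_real_derivative_flow_dx has_real_derivative_primitive]],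
      intro continuous_intros) (simp add: algebra_simps power2_eq_square power3_eq_cube)

lemma abs_log_flow_dx_le: "\<bar>primitive (\<lambda>\<rho>. f_deriv 1 (\<phi> \<rho> y)) r\<bar> \<le> f_deriv_bound 1 * \<bar>r\<bar>"
proof -
  have "norm (primitive (\<lambda>\<rho>. f_deriv 1 (\<phi> \<rho> y)) r - primitive (\<lambda>\<rho>. f_deriv 1 (\<phi> \<rho> y)) 0)
      \<le> f_deriv_bound 1 * norm (r - 0)"
  proof (rule field_differentiable_bound[OF convex_UNIV])
    show "(primitive (\<lambda>\<rho>. f_deriv 1 (\<phi> \<rho> y)) has_field_derivative f_deriv 1 (\<phi> z y))
        (at z within UNIV)" for z
      by (rule has_real_derivative_primitive) (intro continuous_intros)
    show "norm (f_deriv 1 (\<phi> z y)) \<le> f_deriv_bound 1" for z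
      using abs_f_deriv_le by simp
  qed auto
  then show ?thesis by simp
qed


lemma unif_has_deriv_flow: "unif_has_deriv {-T..T} \<phi> flow_dx x"
proof (rule unif_has_deriv_of_ode[where P="\<lambda>r y. f (\<phi> r y)" and a="\<lambda>r. f_deriv 1 (\<phi> r x)"
      and c="\<lambda>r. 0" and W="\<lambda>r. flow_dx r x"])
  show "((\<lambda>r. flow_dx r x) has_real_derivative f_deriv 1 (\<phi> r x) * flow_dx r x + 0) (at r)" for r
    using has_real_derivative_flow_dx by simp
  have "\<forall>\<^sub>F h in at 0. \<forall>r\<in>{-T..T}. \<bar>\<phi> r (x + h) - \<phi> r x\<bar> \<le> exp (f_deriv_bound 1 * \<bar>T\<bar>) * \<bar>h\<bar>"
  proof (intro always_eventually allI ballI)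
    fix h r :: real assume r: "r \<in> {-T..T}"
    have "\<bar>\<phi> r (x + h) - \<phi> r x\<bar> \<le> \<bar>h\<bar> * exp (f_deriv_bound 1 * \<bar>r\<bar>)"
      using flow_lipschitz[of r "x + h" x] by simp
    also have "\<dots> \<le> \<bar>h\<bar> * exp (f_deriv_bound 1 * \<bar>T\<bar>)"
      using r abs_f_deriv_le[of 1 0] by (intro mult_left_mono exp_mono) auto
    finally show "\<bar>\<phi> r (x + h) - \<phi> r x\<bar> \<le> exp (f_deriv_bound 1 * \<bar>T\<bar>) * \<bar>h\<bar>"
      by (simp add: mult.commute)
  qed
  from uniform_limit_taylor2_remainder[OF has_real_derivative_f_deriv_numeral abs_f_deriv_le this]
  show "uniform_limit {-T..T} (\<lambda>h r. (f (\<phi> r (x + h)) - f (\<phi> r x)) / h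
      - f_deriv 1 (\<phi> r x) * ((\<phi> r (x + h) - \<phi> r x) / h)) (\<lambda>r. 0) (at 0)"
    by (simp add: diff_divide_distrib right_diff_distrib)
  show "((\<lambda>r. \<phi> r y) has_real_derivative f (\<phi> r y)) (at r)" for r y
    by (rule flow_has_derivative)
  show "((\<lambda>r. flow_dx r x) has_real_derivative f_deriv 1 (\<phi> r x) * flow_dx r x) (at r)" for r
    by (rule has_real_derivative_flow_dx)
  show "0 < flow_dx r x" for r
    by (rule flow_dx_pos)
  show "\<phi> 0 y - \<phi> 0 x = (y - x) * flow_dx 0 x" for y
    by (simp add: flow_0)
qed

lemma unif_has_deriv_f_deriv_flow:
  "unif_has_deriv {-T..T} (\<lambda>r y. f_deriv n (\<phi> r y)) (\<lambda>r y. f_deriv (Suc n) (\<phi> r y) * flow_dx r y) x"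
  by (rule unif_has_deriv_compose[OF unif_has_deriv_flow _ has_real_derivative_f_deriv
        has_real_derivative_f_deriv abs_f_deriv_le abs_f_deriv_le])
     (intro bounded_image_Icc continuous_intros)

lemma uniform_limit_f_deriv_flow:
  "uniform_limit {-T..T} (\<lambda>h r. f_deriv n (\<phi> r (x + h))) (\<lambda>r. f_deriv n (\<phi> r x)) (at 0)"
  by (rule unif_has_deriv_imp_uniform_limit[OF unif_has_deriv_f_deriv_flow])
     (intro bounded_image_Icc continuous_intros)

lemma uniform_limit_flow_dx:
  "uniform_limit {-T..T} (\<lambda>h r. flow_dx r (x + h)) (\<lambda>r. flow_dx r x) (at 0)"
proof -
  define A where "A r y = primitive (\<lambda>\<rho>. f_deriv 1 (\<phi> \<rho> y)) r" for r y
  define K where "K = f_deriv_bound 1 * \<bar>T\<bar>"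
  have dA: "((\<lambda>r. A r y) has_real_derivative f_deriv 1 (\<phi> r y)) (at r)" for r y
    unfolding A_def by (rule has_real_derivative_primitive) (intro continuous_intros)
  have lim: "uniform_limit {-T..T} (\<lambda>h r. A r (x + h)) (\<lambda>r. A r x) (at 0)"
    by (rule uniform_limit_from_time_derivative[OF dA _ uniform_limit_f_deriv_flow]) (simp add: A_def)
  have cont: "uniformly_continuous_on {-K..K} exp"
    by (intro compact_uniformly_continuous continuous_intros) auto
  have range: "A r y \<in> {-K..K}" if "r \<in> {-T..T}" for r y
  proof -
    have "\<bar>A r y\<bar> \<le> f_deriv_bound 1 * \<bar>r\<bar>"
      unfolding A_def by (rule abs_log_flow_dx_le)
    also have "\<dots> \<le> K"
      unfolding K_def using that abs_f_deriv_le[of 1 0] by (intro mult_left_mono) auto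
    finally have "\<bar>A r y\<bar> \<le> K" .
    then show ?thesis by auto
  qed
  have "uniform_limit {-T..T} (\<lambda>h r. exp (A r (x + h))) (\<lambda>r. exp (A r x)) (at 0)"
    by (rule uniform_limit_compose_uniformly_continuous_on[OF lim cont always_eventually])
       (use range in auto)
  then show ?thesis by (simp add: flow_dx_def A_def)
qed

lemma unif_has_deriv_flow_dx: "unif_has_deriv {-T..T} flow_dx flow_dxx x"
proof (rule unif_has_deriv_linear_ode[where a="\<lambda>r y. f_deriv 1 (\<phi> r y)" and b="\<lambda>r y. 0"
      and a'="\<lambda>r y. f_deriv 2 (\<phi> r y) * flow_dx r y" and b'="\<lambda>r y. 0" and W="\<lambda>r. flow_dx r x"])
  show "((\<lambda>r. flow_dxx r x) has_real_derivative
      f_deriv 1 (\<phi> r x) * flow_dxx r x + (f_deriv 2 (\<phi> r x) * flow_dx r x * flow_dx r x + 0)) (at r)" for r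
    using has_real_derivative_flow_dxx by simp
  show "unif_has_deriv {-T..T} (\<lambda>r y. f_deriv 1 (\<phi> r y)) (\<lambda>r y. f_deriv 2 (\<phi> r y) * flow_dx r y) x"
    using unif_has_deriv_f_deriv_flow[where n=1] by (simp add: numeral_2_eq_2)
  show "((\<lambda>r. flow_dx r y) has_real_derivative f_deriv 1 (\<phi> r y) * flow_dx r y + 0) (at r)" for r y
    using has_real_derivative_flow_dx by simp
  show "((\<lambda>r. flow_dx r x) has_real_derivative f_deriv 1 (\<phi> r x) * flow_dx r x) (at r)" for r
    by (rule has_real_derivative_flow_dx)
qed (auto simp: has_real_derivative_flow_dx flow_dx_pos unif_has_deriv_zero uniform_limit_flow_dx
    intro!: bounded_image_Icc continuous_intros)

lemma uniform_limit_flow_dxx: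
  "uniform_limit {-T..T} (\<lambda>h r. flow_dxx r (x + h)) (\<lambda>r. flow_dxx r x) (at 0)"
proof -
  define B where "B r y = primitive (\<lambda>\<rho>. f_deriv 2 (\<phi> \<rho> y) * flow_dx \<rho> y) r" for r y
  have dB: "((\<lambda>r. B r y) has_real_derivative f_deriv 2 (\<phi> r y) * flow_dx r y) (at r)" for r y
    unfolding B_def by (rule has_real_derivative_primitive) (intro continuous_intros)
  have Q: "uniform_limit {-T..T} (\<lambda>h r. f_deriv 2 (\<phi> r (x + h)) * flow_dx r (x + h))
      (\<lambda>r. f_deriv 2 (\<phi> r x) * flow_dx r x) (at 0)"
    by (intro uniform_lim_mult uniform_limit_f_deriv_flow uniform_limit_flow_dx
        bounded_image_Icc continuous_intros)
  have "uniform_limit {-T..T} (\<lambda>h r. B r (x + h)) (\<lambda>r. B r x) (at 0)"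
    by (rule uniform_limit_from_time_derivative[OF dB _ Q]) (simp add: B_def)
  then have "uniform_limit {-T..T} (\<lambda>h r. flow_dx r (x + h) * B r (x + h))
      (\<lambda>r. flow_dx r x * B r x) (at 0)"
    by (intro uniform_lim_mult uniform_limit_flow_dx bounded_image_Icc continuous_intros
        has_real_derivative_imp_continuous_on[OF dB])
  then show ?thesis by (simp add: flow_dxx_def B_def)
qed

lemma unif_has_deriv_flow_dxx: "unif_has_deriv {-T..T} flow_dxx flow_dxxx x"
proof (rule unif_has_deriv_linear_ode[where a="\<lambda>r y. f_deriv 1 (\<phi> r y)"
      and b="\<lambda>r y. f_deriv 2 (\<phi> r y) * (flow_dx r y * flow_dx r y)"
      and a'="\<lambda>r y. f_deriv 2 (\<phi> r y) * flow_dx r y"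
      and b'="\<lambda>r y. f_deriv 3 (\<phi> r y) * flow_dx r y * (flow_dx r y * flow_dx r y)
        + f_deriv 2 (\<phi> r y) * (flow_dxx r y * flow_dx r y + flow_dx r y * flow_dxx r y)"
      and W="\<lambda>r. flow_dx r x"])
  show "((\<lambda>r. flow_dxx r y) has_real_derivative
      f_deriv 1 (\<phi> r y) * flow_dxx r y + f_deriv 2 (\<phi> r y) * (flow_dx r y * flow_dx r y)) (at r)" for r y
    using has_real_derivative_flow_dxx by (simp add: mult.assoc)
  show "((\<lambda>r. flow_dxxx r x) has_real_derivative f_deriv 1 (\<phi> r x) * flow_dxxx r x
      + (f_deriv 2 (\<phi> r x) * flow_dx r x * flow_dxx r x
        + (f_deriv 3 (\<phi> r x) * flow_dx r x * (flow_dx r x * flow_dx r x)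
          + f_deriv 2 (\<phi> r x) * (flow_dxx r x * flow_dx r x + flow_dx r x * flow_dxx r x)))) (at r)" for r
    by (rule DERIV_cong[OF has_real_derivative_flow_dxxx]) (simp add: algebra_simps power3_eq_cube)
  show "unif_has_deriv {-T..T} (\<lambda>r y. f_deriv 1 (\<phi> r y)) (\<lambda>r y. f_deriv 2 (\<phi> r y) * flow_dx r y) x"
    using unif_has_deriv_f_deriv_flow[where n=1] by (simp add: numeral_2_eq_2)
  have f2: "unif_has_deriv {-T..T} (\<lambda>r y. f_deriv 2 (\<phi> r y)) (\<lambda>r y. f_deriv 3 (\<phi> r y) * flow_dx r y) x"
    using unif_has_deriv_f_deriv_flow[where n=2] by (simp add: eval_nat_numeral)
  show "unif_has_deriv {-T..T} (\<lambda>r y. f_deriv 2 (\<phi> r y) * (flow_dx r y * flow_dx r y))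
      (\<lambda>r y. f_deriv 3 (\<phi> r y) * flow_dx r y * (flow_dx r y * flow_dx r y)
        + f_deriv 2 (\<phi> r y) * (flow_dxx r y * flow_dx r y + flow_dx r y * flow_dxx r y)) x"
    by (intro unif_has_deriv_mult f2 unif_has_deriv_flow_dx bounded_image_Icc continuous_intros)
  show "((\<lambda>r. flow_dx r x) has_real_derivative f_deriv 1 (\<phi> r x) * flow_dx r x) (at r)" for r
    by (rule has_real_derivative_flow_dx)
qed (auto simp: has_real_derivative_flow_dx flow_dx_pos uniform_limit_flow_dxx
    intro!: bounded_image_Icc continuous_intros)

lemma has_real_derivative_flow_initial_value:
  "(\<phi> s has_real_derivative flow_dx s x) (at x)"
  "(flow_dx s has_real_derivative flow_dxx s x) (at x)"
  "(flow_dxx s has_real_derivative flow_dxxx s x) (at x)"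
proof -
  have s: "s \<in> {-\<bar>s\<bar>..\<bar>s\<bar>}" by (cases "s \<ge> 0") auto
  show "(\<phi> s has_real_derivative flow_dx s x) (at x)"
    by (rule unif_has_deriv_imp_has_real_derivative[OF unif_has_deriv_flow s])
  show "(flow_dx s has_real_derivative flow_dxx s x) (at x)"
    by (rule unif_has_deriv_imp_has_real_derivative[OF unif_has_deriv_flow_dx s])
  show "(flow_dxx s has_real_derivative flow_dxxx s x) (at x)"
    by (rule unif_has_deriv_imp_has_real_derivative[OF unif_has_deriv_flow_dxx s])
qed

lemma has_real_derivative_flow_derivs_at_0:
  "((\<lambda>s. flow_dx s x) has_real_derivative f_deriv 1 x) (at 0)"
  "((\<lambda>s. flow_dxx s x) has_real_derivative f_deriv 2 x) (at 0)"
  "((\<lambda>s. flow_dxxx s x) has_real_derivative f_deriv 3 x) (at 0)"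
  using has_real_derivative_flow_dx[of x 0] has_real_derivative_flow_dxx[of x 0]
    has_real_derivative_flow_dxxx[of x 0]
  by (simp_all add: flow_0)

end

section \<open>Schwarzian derivatives\<close>

definition schwarzian_of :: "real \<Rightarrow> real \<Rightarrow> real \<Rightarrow> real" where
  "schwarzian_of d1 d2 d3 = d3 / d1 - 3 / 2 * (d2 / d1)\<^sup>2"

lemma schwarzian_of_chain:
  assumes "g1 \<noteq> 0" "h1 \<noteq> 0"
  shows "schwarzian_of (g1 * h1) (g2 * h1\<^sup>2 + g1 * h2) (g3 * h1 ^ 3 + 3 * g2 * h1 * h2 + g1 * h3)
    = schwarzian_of g1 g2 g3 * h1\<^sup>2 + schwarzian_of h1 h2 h3"
  using assms by (simp add: schwarzian_of_def field_simps power2_eq_square power3_eq_cube)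

definition has_derivs3_on ::
    "(real \<Rightarrow> real) \<Rightarrow> (real \<Rightarrow> real) \<Rightarrow> (real \<Rightarrow> real) \<Rightarrow> (real \<Rightarrow> real) \<Rightarrow> real set \<Rightarrow> bool" where
  "has_derivs3_on g g1 g2 g3 U \<longleftrightarrow> open U \<and> (\<forall>t\<in>U. (g has_real_derivative g1 t) (at t) \<and>
      (g1 has_real_derivative g2 t) (at t) \<and> (g2 has_real_derivative g3 t) (at t))"

lemma has_derivs3_on_higher_deriv:
  assumes "has_derivs3_on g g1 g2 g3 U" "t \<in> U"
  shows "deriv g t = g1 t" "(deriv ^^ 2) g t = g2 t" "(deriv ^^ 3) g t = g3 t"
proof -
  have U: "open U" and d: "\<And>t. t \<in> U \<Longrightarrow> (g has_real_derivative g1 t) (at t) \<and>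
      (g1 has_real_derivative g2 t) (at t) \<and> (g2 has_real_derivative g3 t) (at t)"
    using assms(1) unfolding has_derivs3_on_def by auto
  have e1: "deriv g x = g1 x" if "x \<in> U" for x using d[OF that] by (simp add: DERIV_imp_deriv)
  have d2: "(deriv g has_real_derivative g2 x) (at x)" if "x \<in> U" for x
    by (rule has_field_derivative_transform_within_open[OF _ U that]) (use d[OF that] e1 in auto)
  have e2: "deriv (deriv g) x = g2 x" if "x \<in> U" for x using d2[OF that] by (simp add: DERIV_imp_deriv)
  have d3: "(deriv (deriv g) has_real_derivative g3 x) (at x)" if "x \<in> U" for x
    by (rule has_field_derivative_transform_within_open[OF _ U that]) (use d[OF that] e2 in auto)
  show "deriv g t = g1 t" by (rule e1[OF assms(2)])
  show "(deriv ^^ 2) g t = g2 t" using e2[OF assms(2)] by (simp add: numeral_2_eq_2)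
  show "(deriv ^^ 3) g t = g3 t" using d3[OF assms(2)] by (simp add: numeral_3_eq_3 DERIV_imp_deriv)
qed

lemma schwarzian_eq_schwarzian_of:
  "has_derivs3_on g g1 g2 g3 U \<Longrightarrow> t \<in> U \<Longrightarrow> schwarzian g t = schwarzian_of (g1 t) (g2 t) (g3 t)"
  by (simp add: schwarzian_def schwarzian_of_def has_derivs3_on_higher_deriv)

lemma has_derivs3_on_subset:
  "has_derivs3_on g g1 g2 g3 U \<Longrightarrow> open V \<Longrightarrow> V \<subseteq> U \<Longrightarrow> has_derivs3_on g g1 g2 g3 V"
  unfolding has_derivs3_on_def by blast

lemma has_derivs3_on_compose:
  assumes h: "has_derivs3_on h h1 h2 h3 U" and g: "has_derivs3_on g g1 g2 g3 V" and "h ` U \<subseteq> V"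
  shows "has_derivs3_on (\<lambda>t. g (h t)) (\<lambda>t. g1 (h t) * h1 t) (\<lambda>t. g2 (h t) * (h1 t)\<^sup>2 + g1 (h t) * h2 t)
    (\<lambda>t. g3 (h t) * h1 t ^ 3 + 3 * g2 (h t) * h1 t * h2 t + g1 (h t) * h3 t) U"
  unfolding has_derivs3_on_def
proof (intro conjI ballI)
  show "open U" using h by (simp add: has_derivs3_on_def)
  fix t assume t: "t \<in> U"
  have hd: "(h has_real_derivative h1 t) (at t)" "(h1 has_real_derivative h2 t) (at t)"
    "(h2 has_real_derivative h3 t) (at t)"
    using h t unfolding has_derivs3_on_def by auto
  have gd: "(g has_real_derivative g1 (h t)) (at (h t))" "(g1 has_real_derivative g2 (h t)) (at (h t))"
    "(g2 has_real_derivative g3 (h t)) (at (h t))"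
    using g assms(3) t unfolding has_derivs3_on_def by auto
  show "((\<lambda>t. g (h t)) has_real_derivative g1 (h t) * h1 t) (at t)"
    by (rule DERIV_chain2[OF gd(1) hd(1)])
  have c1: "((\<lambda>t. g1 (h t)) has_real_derivative g2 (h t) * h1 t) (at t)"
    by (rule DERIV_chain2[OF gd(2) hd(1)])
  have c2: "((\<lambda>t. g2 (h t)) has_real_derivative g3 (h t) * h1 t) (at t)"
    by (rule DERIV_chain2[OF gd(3) hd(1)])
  show "((\<lambda>t. g1 (h t) * h1 t) has_real_derivative g2 (h t) * (h1 t)\<^sup>2 + g1 (h t) * h2 t) (at t)"
    by (rule DERIV_cong[OF DERIV_mult[OF c1 hd(2)]]) (simp add: power2_eq_square algebra_simps)
  have p2: "((\<lambda>t. (h1 t)\<^sup>2) has_real_derivative 2 * h1 t * h2 t) (at t)"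
    using DERIV_mult[OF hd(2) hd(2)] by (simp add: power2_eq_square algebra_simps)
  show "((\<lambda>t. g2 (h t) * (h1 t)\<^sup>2 + g1 (h t) * h2 t) has_real_derivative
     g3 (h t) * h1 t ^ 3 + 3 * g2 (h t) * h1 t * h2 t + g1 (h t) * h3 t) (at t)"
    by (rule DERIV_cong[OF DERIV_add[OF DERIV_mult[OF c2 p2] DERIV_mult[OF c1 hd(3)]]])
       (simp add: power2_eq_square power3_eq_cube algebra_simps)
qed

definition tan_d1 :: "real \<Rightarrow> real \<Rightarrow> real" where
  "tan_d1 k x = 1 + (tan (x / k))\<^sup>2"

definition tan_d2 :: "real \<Rightarrow> real \<Rightarrow> real" where
  "tan_d2 k x = 2 / k * tan (x / k) * (1 + (tan (x / k))\<^sup>2)"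

definition tan_d3 :: "real \<Rightarrow> real \<Rightarrow> real" where
  "tan_d3 k x = 2 / k\<^sup>2 * (1 + (tan (x / k))\<^sup>2) * (1 + 3 * (tan (x / k))\<^sup>2)"

lemma tan_d1_pos: "tan_d1 k x > 0"
  by (simp add: tan_d1_def add_pos_nonneg)

lemma has_real_derivative_tan_scaled:
  assumes "k \<noteq> 0" "cos (x / k) \<noteq> 0"
  shows "((\<lambda>x. tan (x / k)) has_real_derivative tan_d1 k x / k) (at x)"
proof -
  have "((\<lambda>x. tan (x / k)) has_real_derivative inverse ((cos (x / k))\<^sup>2) * (1 / k)) (at x)"
    by (rule DERIV_chain2[OF DERIV_tan[OF assms(2)] DERIV_cdivide[OF DERIV_ident]])
  then show ?thesis using tan_sec[OF assms(2)] by (simp add: tan_d1_def power_inverse)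
qed

lemma has_derivs3_on_tan_scaled:
  assumes k: "k \<noteq> 0"
  shows "has_derivs3_on (\<lambda>x. k * tan (x / k)) (tan_d1 k) (tan_d2 k) (tan_d3 k) {x. cos (x / k) \<noteq> 0}"
  unfolding has_derivs3_on_def
proof (intro conjI ballI)
  show "open {x. cos (x / k) \<noteq> 0}" using k by (intro open_Collect_neq continuous_intros) auto
  fix x assume "x \<in> {x. cos (x / k) \<noteq> 0}"
  then have dt: "((\<lambda>x. tan (x / k)) has_real_derivative tan_d1 k x / k) (at x)"
    using has_real_derivative_tan_scaled k by blast
  show "((\<lambda>x. k * tan (x / k)) has_real_derivative tan_d1 k x) (at x)"
    using DERIV_cmult[OF dt, of k] k by simp
  have "((\<lambda>x. 1 + tan (x / k) * tan (x / k)) has_real_derivative tan_d2 k x) (at x)"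
    by (rule DERIV_cong[OF DERIV_add[OF DERIV_const DERIV_mult[OF dt dt]]])
       (use k in \<open>simp add: tan_d2_def tan_d1_def field_simps power2_eq_square\<close>)
  then show "(tan_d1 k has_real_derivative tan_d2 k x) (at x)"
    by (simp add: tan_d1_def[abs_def] power2_eq_square)
  have "((\<lambda>x. 2 / k * tan (x / k) * (1 + tan (x / k) * tan (x / k))) has_real_derivative tan_d3 k x) (at x)"
    by (rule DERIV_cong[OF DERIV_mult[OF DERIV_cmult[OF dt] DERIV_add[OF DERIV_const DERIV_mult[OF dt dt]]]])
       (use k in \<open>simp add: tan_d3_def tan_d1_def field_simps power2_eq_square\<close>)
  then show "(tan_d2 k has_real_derivative tan_d3 k x) (at x)"
    by (simp add: tan_d2_def[abs_def] power2_eq_square)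
qed

lemma has_real_derivative_tan_d1:
  assumes "k \<noteq> 0" "cos (x / k) \<noteq> 0"
  shows "(tan_d1 k has_real_derivative 2 / k * tan (x / k) * tan_d1 k x) (at x)"
  using has_derivs3_on_tan_scaled[OF assms(1)] assms(2)
  by (auto simp: has_derivs3_on_def tan_d2_def tan_d1_def)

lemma schwarzian_of_tan_scaled:
  assumes "k \<noteq> 0"
  shows "schwarzian_of (tan_d1 k x) (tan_d2 k x) (tan_d3 k x) = 2 / k\<^sup>2"
proof -
  define T where "T = tan (x / k)"
  have nz: "1 + T\<^sup>2 \<noteq> 0" using tan_d1_pos[of k x] by (simp add: tan_d1_def T_def)
  have d1: "tan_d1 k x = 1 + T\<^sup>2"
    and d2: "tan_d2 k x = 2 / k * T * (1 + T\<^sup>2)"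
    and d3: "tan_d3 k x = 2 / k\<^sup>2 * (1 + 3 * T\<^sup>2) * (1 + T\<^sup>2)"
    unfolding tan_d1_def tan_d2_def tan_d3_def T_def by (simp_all only: mult_ac)
  have q3: "tan_d3 k x / tan_d1 k x = 2 / k\<^sup>2 * (1 + 3 * T\<^sup>2)"
    unfolding d1 d3 using nz by (rule nonzero_mult_div_cancel_right)
  have q2: "tan_d2 k x / tan_d1 k x = 2 / k * T"
    unfolding d1 d2 using nz by (rule nonzero_mult_div_cancel_right)
  show ?thesis
    unfolding schwarzian_of_def q2 q3 using assms by (simp add: field_simps power2_eq_square)
qed

definition arctan_d1 :: "real \<Rightarrow> real \<Rightarrow> real" where
  "arctan_d1 k t = k\<^sup>2 / (k\<^sup>2 + t\<^sup>2)"

definition arctan_d2 :: "real \<Rightarrow> real \<Rightarrow> real" where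
  "arctan_d2 k t = - 2 * k\<^sup>2 * t / (k\<^sup>2 + t\<^sup>2)\<^sup>2"

definition arctan_d3 :: "real \<Rightarrow> real \<Rightarrow> real" where
  "arctan_d3 k t = 2 * k\<^sup>2 * (3 * t\<^sup>2 - k\<^sup>2) / (k\<^sup>2 + t\<^sup>2) ^ 3"

lemma arctan_d1_pos: "k \<noteq> 0 \<Longrightarrow> arctan_d1 k t > 0"
  by (simp add: arctan_d1_def add_pos_nonneg)

lemma has_derivs3_on_arctan_scaled:
  assumes k: "k \<noteq> 0"
  shows "has_derivs3_on (\<lambda>t. k * arctan (t / k) + c) (arctan_d1 k) (arctan_d2 k) (arctan_d3 k) UNIV"
  unfolding has_derivs3_on_def
proof (intro conjI ballI open_UNIV)
  fix t :: real
  have pos: "k\<^sup>2 + t\<^sup>2 > 0" using k by (simp add: add_pos_nonneg)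
  have "((\<lambda>t. k * arctan (t / k) + c) has_real_derivative k * (inverse (1 + (t / k)\<^sup>2) * (1 / k)) + 0) (at t)"
    by (intro DERIV_add DERIV_const DERIV_cmult DERIV_chain2[OF DERIV_arctan DERIV_cdivide[OF DERIV_ident]])
  moreover have "1 + (t / k)\<^sup>2 = (k\<^sup>2 + t\<^sup>2) / k\<^sup>2"
    using k by (simp add: field_simps power_divide)
  then have "k * (inverse (1 + (t / k)\<^sup>2) * (1 / k)) + 0 = arctan_d1 k t"
    using k pos by (simp add: arctan_d1_def)
  ultimately show "((\<lambda>t. k * arctan (t / k) + c) has_real_derivative arctan_d1 k t) (at t)" by simp
  define u where "u = k\<^sup>2 + t\<^sup>2"
  have u: "u \<noteq> 0" unfolding u_def using pos by linarith
  have du: "((\<lambda>t. k\<^sup>2 + t\<^sup>2) has_real_derivative 2 * t) (at t)"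
    by (auto intro!: derivative_eq_intros)
  have "((\<lambda>t. k\<^sup>2 / (k\<^sup>2 + t\<^sup>2)) has_real_derivative
      (0 * (k\<^sup>2 + t\<^sup>2) - k\<^sup>2 * (2 * t)) / ((k\<^sup>2 + t\<^sup>2) * (k\<^sup>2 + t\<^sup>2))) (at t)"
    by (rule DERIV_divide[OF DERIV_const du]) (use pos in linarith)
  moreover have "(0 * (k\<^sup>2 + t\<^sup>2) - k\<^sup>2 * (2 * t)) / ((k\<^sup>2 + t\<^sup>2) * (k\<^sup>2 + t\<^sup>2)) = arctan_d2 k t"
    by (simp add: arctan_d2_def power2_eq_square)
  ultimately show "(arctan_d1 k has_real_derivative arctan_d2 k t) (at t)"
    by (simp add: arctan_d1_def[abs_def])
  have du2: "((\<lambda>t. (k\<^sup>2 + t\<^sup>2) * (k\<^sup>2 + t\<^sup>2)) has_real_derivative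
      2 * t * (k\<^sup>2 + t\<^sup>2) + 2 * t * (k\<^sup>2 + t\<^sup>2)) (at t)"
    by (rule DERIV_mult[OF du du])
  have dn: "((\<lambda>t. - 2 * k\<^sup>2 * t) has_real_derivative - 2 * k\<^sup>2) (at t)"
    using DERIV_cmult[OF DERIV_ident, of "- 2 * k\<^sup>2" t] by simp
  have "((\<lambda>t. - 2 * k\<^sup>2 * t / ((k\<^sup>2 + t\<^sup>2) * (k\<^sup>2 + t\<^sup>2))) has_real_derivative
      ((- 2 * k\<^sup>2) * (u * u) - (- 2 * k\<^sup>2 * t) * (2 * t * u + 2 * t * u)) / ((u * u) * (u * u))) (at t)"
    unfolding u_def
    by (rule DERIV_divide[OF dn du2])
       (use u in \<open>simp add: u_def[symmetric]\<close>)
  moreover have "((- 2 * k\<^sup>2) * (u * u) - (- 2 * k\<^sup>2 * t) * (2 * t * u + 2 * t * u)) / ((u * u) * (u * u))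
      = 2 * k\<^sup>2 * (4 * t\<^sup>2 - u) / (u * u * u)"
    using u by (simp add: field_simps power2_eq_square)
  moreover have "2 * k\<^sup>2 * (4 * t\<^sup>2 - u) / (u * u * u) = arctan_d3 k t"
    by (simp add: arctan_d3_def u_def power3_eq_cube algebra_simps)
  ultimately show "(arctan_d2 k has_real_derivative arctan_d3 k t) (at t)"
    by (simp add: arctan_d2_def[abs_def] power2_eq_square)
qed

lemma arctan_d1_tan_d1:
  assumes "k \<noteq> 0"
  shows "arctan_d1 k (k * tan (x / k)) * tan_d1 k x = 1"
proof -
  have nz: "1 + (tan (x / k))\<^sup>2 \<noteq> 0" using tan_d1_pos[of k x] by (simp add: tan_d1_def)
  have "k\<^sup>2 + (k * tan (x / k))\<^sup>2 = k\<^sup>2 * (1 + (tan (x / k))\<^sup>2)"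
    by (simp add: power_mult_distrib algebra_simps)
  then show ?thesis
    using nz assms by (simp add: arctan_d1_def tan_d1_def)
qed

section \<open>The two projective circles\<close>

fun chart_scale :: "proj_circle \<Rightarrow> real" where
  "chart_scale CircA = 2"
| "chart_scale CircB = 1"

lemma chart_scale_pos: "chart_scale S > 0"
  by (cases S) auto

lemma Phi_eq: "Phi S x = chart_scale S * tan (x / chart_scale S)"
  by (cases S) auto

lemma Psi_eq: "Psi S t = chart_scale S * arctan (t / chart_scale S)"
  by (cases S) auto

lemma in_chart_iff: "in_chart S x \<longleftrightarrow> cos (x / chart_scale S) \<noteq> 0"
  by (cases S) auto

lemma tilde_map_eq:
  "tilde_map S \<psi> \<theta> = (\<lambda>t. chart_scale S * tan (\<psi> (chart_scale S * arctan (t / chart_scale S)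
     + (\<theta> - Psi S (Phi S \<theta>))) / chart_scale S))"
  by (simp add: tilde_map_def Psi_at_def Phi_eq Psi_eq fun_eq_iff)

lemma open_chart: "open {x. cos (x / chart_scale S) \<noteq> 0}"
  using chart_scale_pos[of S] by (intro open_Collect_neq continuous_intros) auto

lemma lam_eq_tan_d1:
  assumes "cos (x / chart_scale S) \<noteq> 0"
  shows "lam S x = tan_d1 (chart_scale S) x"
proof -
  have "chart_scale S \<noteq> 0" using chart_scale_pos[of S] by simp
  then show ?thesis
    using has_derivs3_on_tan_scaled assms unfolding lam_def has_derivs3_on_def
    by (simp add: Phi_eq[abs_def] DERIV_imp_deriv)
qed

lemma periodic_continuous_bounded:
  fixes g :: "real \<Rightarrow> real"
  assumes per: "\<And>x. g (x + p) = g x" and p: "p > 0" and cont: "continuous_on UNIV g"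
  shows "\<exists>M. \<forall>z. \<bar>g z\<bar> \<le> M"
proof -
  interpret periodic_fun_simple g p by standard (rule per)
  obtain M where M: "\<forall>y\<in>{0..p}. \<bar>g y\<bar> \<le> M"
    using bounded_image_Icc[OF cont, of 0 p] by (auto simp: bounded_iff)
  have "\<bar>g z\<bar> \<le> M" for z
  proof -
    have "z - of_int \<lfloor>z / p\<rfloor> * p \<in> {0..p}"
      using floor_divide_lower[OF p, of z] floor_divide_upper[OF p, of z] by (simp add: algebra_simps)
    moreover have "g (z - of_int \<lfloor>z / p\<rfloor> * p) = g z" by (rule minus_of_int)
    ultimately show ?thesis using M by metis
  qed
  then show ?thesis by blast
qed

lemma smooth_vf_deriv_bounded:
  assumes "smooth_vf S f"
  shows "\<exists>M. \<forall>z. \<bar>(deriv ^^ n) f z\<bar> \<le> M"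
proof -
  have diff: "\<And>n x. (deriv ^^ n) f differentiable (at x)" and per: "\<And>x. f (x + period S) = f x"
    using assms unfolding smooth_vf_def by auto
  have per_n: "(deriv ^^ n) f (x + period S) = (deriv ^^ n) f x" for n x
  proof (induction n arbitrary: x)
    case (Suc n)
    have "((deriv ^^ n) f has_real_derivative deriv ((deriv ^^ n) f) (x + period S)) (at (x + period S))"
      using diff by (simp add: DERIV_deriv_iff_real_differentiable)
    then have "((deriv ^^ n) f has_real_derivative deriv ((deriv ^^ n) f) (x + period S)) (at x)"
      using DERIV_shift[of "(deriv ^^ n) f" _ x "period S"] Suc.IH by simp
    then show ?case by (simp add: DERIV_imp_deriv)
  qed (simp add: per)
  have "continuous_on UNIV ((deriv ^^ n) f)"
    by (rule has_real_derivative_imp_continuous_on[where g'="deriv ((deriv ^^ n) f)"])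
       (use diff in \<open>simp add: DERIV_deriv_iff_real_differentiable\<close>)
  moreover have "period S > 0" by (cases S) auto
  ultimately show ?thesis
    by (intro periodic_continuous_bounded[where g="(deriv ^^ n) f" and p="period S"] per_n)
qed

lemma bounded_smooth_flow_if_smooth_vf:
  assumes "smooth_vf S f" "is_flow f \<phi>"
  shows "bounded_smooth_flow f \<phi>"
  using assms smooth_vf_deriv_bounded unfolding smooth_vf_def is_flow_def
  by unfold_locales auto

section \<open>The infinitesimal Schwarzian\<close>

context bounded_smooth_flow
begin

lemma has_real_derivative_schwarzian_of_flow_derivs:
  "((\<lambda>s. schwarzian_of (flow_dx s x) (flow_dxx s x) (flow_dxxx s x)) has_real_derivative f_deriv 3 x) (at 0)"
proof -
  note d = has_real_derivative_flow_derivs_at_0[of x]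
  have q3: "((\<lambda>s. flow_dxxx s x / flow_dx s x) has_real_derivative f_deriv 3 x) (at 0)"
    using DERIV_divide[OF d(3) d(1)] by simp
  have q2: "((\<lambda>s. flow_dxx s x / flow_dx s x) has_real_derivative f_deriv 2 x) (at 0)"
    using DERIV_divide[OF d(2) d(1)] by simp
  have "((\<lambda>s. (flow_dxx s x / flow_dx s x)\<^sup>2) has_real_derivative 0) (at 0)"
    using DERIV_mult[OF q2 q2] by (simp add: power2_eq_square)
  from DERIV_diff[OF q3 DERIV_cmult[OF this, of "3 / 2"]]
  show ?thesis by (simp add: schwarzian_of_def)
qed

lemma schwarzian_flow_in_chart:
  assumes k: "k \<noteq> 0" and t0: "k * arctan (t0 / k) + c = \<theta>" and chart: "cos (\<phi> s \<theta> / k) \<noteq> 0"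
  shows "schwarzian (\<lambda>t. k * tan (\<phi> s (k * arctan (t / k) + c) / k)) t0
    = (2 / k\<^sup>2 * (flow_dx s \<theta>)\<^sup>2 + schwarzian_of (flow_dx s \<theta>) (flow_dxx s \<theta>) (flow_dxxx s \<theta>))
        * (arctan_d1 k t0)\<^sup>2
      + schwarzian_of (arctan_d1 k t0) (arctan_d2 k t0) (arctan_d3 k t0)"
proof -
  define P where "P t = k * arctan (t / k) + c" for t
  define y where "y = \<phi> s \<theta>"
  define H1 where "H1 = flow_dx s \<theta> * arctan_d1 k t0"
  define H2 where "H2 = flow_dxx s \<theta> * (arctan_d1 k t0)\<^sup>2 + flow_dx s \<theta> * arctan_d2 k t0"
  define H3 where "H3 = flow_dxxx s \<theta> * arctan_d1 k t0 ^ 3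
    + 3 * flow_dxx s \<theta> * arctan_d1 k t0 * arctan_d2 k t0 + flow_dx s \<theta> * arctan_d3 k t0"
  have "has_derivs3_on (\<phi> s) (flow_dx s) (flow_dxx s) (flow_dxxx s) UNIV"
    unfolding has_derivs3_on_def using has_real_derivative_flow_initial_value by auto
  then have inner: "has_derivs3_on (\<lambda>t. \<phi> s (P t)) (\<lambda>t. flow_dx s (P t) * arctan_d1 k t)
      (\<lambda>t. flow_dxx s (P t) * (arctan_d1 k t)\<^sup>2 + flow_dx s (P t) * arctan_d2 k t)
      (\<lambda>t. flow_dxxx s (P t) * arctan_d1 k t ^ 3 + 3 * flow_dxx s (P t) * arctan_d1 k t * arctan_d2 k t
        + flow_dx s (P t) * arctan_d3 k t) UNIV"
    unfolding P_def by (rule has_derivs3_on_compose[OF has_derivs3_on_arctan_scaled[OF k]]) auto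
  define U where "U = (\<lambda>t. \<phi> s (P t)) -` {x. cos (x / k) \<noteq> 0}"
  have "continuous_on UNIV (\<lambda>t. \<phi> s (P t))"
    using inner unfolding has_derivs3_on_def
    by (intro has_real_derivative_imp_continuous_on[where g'="\<lambda>t. flow_dx s (P t) * arctan_d1 k t"]) blast
  then have U: "open U"
    unfolding U_def using k by (intro open_vimage open_Collect_neq continuous_intros) auto
  have t0U: "t0 \<in> U" using chart t0 by (simp add: U_def P_def)
  have "(\<lambda>t. \<phi> s (P t)) ` U \<subseteq> {x. cos (x / k) \<noteq> 0}" by (auto simp: U_def)
  note outer = has_derivs3_on_compose[OF has_derivs3_on_subset[OF inner U subset_UNIV]
      has_derivs3_on_tan_scaled[OF k] this]
  from schwarzian_eq_schwarzian_of[OF outer t0U]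
  have "schwarzian (\<lambda>t. k * tan (\<phi> s (P t) / k)) t0 = schwarzian_of (tan_d1 k y * H1)
      (tan_d2 k y * H1\<^sup>2 + tan_d1 k y * H2) (tan_d3 k y * H1 ^ 3 + 3 * tan_d2 k y * H1 * H2 + tan_d1 k y * H3)"
    using t0 by (simp add: P_def y_def H1_def H2_def H3_def)
  also have "\<dots> = schwarzian_of (tan_d1 k y) (tan_d2 k y) (tan_d3 k y) * H1\<^sup>2 + schwarzian_of H1 H2 H3"
    using tan_d1_pos[of k y] flow_dx_pos[of s \<theta>] arctan_d1_pos[OF k, of t0]
    by (intro schwarzian_of_chain) (auto simp: H1_def)
  also have "schwarzian_of H1 H2 H3 = schwarzian_of (flow_dx s \<theta>) (flow_dxx s \<theta>) (flow_dxxx s \<theta>)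
      * (arctan_d1 k t0)\<^sup>2 + schwarzian_of (arctan_d1 k t0) (arctan_d2 k t0) (arctan_d3 k t0)"
    unfolding H1_def H2_def H3_def using flow_dx_pos[of s \<theta>] arctan_d1_pos[OF k, of t0]
    by (intro schwarzian_of_chain) auto
  finally show ?thesis
    using schwarzian_of_tan_scaled[OF k] by (simp add: P_def H1_def power_mult_distrib algebra_simps)
qed

lemma eventually_flow_in_open:
  assumes "open V" "y \<in> V"
  shows "\<forall>\<^sub>F s in nhds 0. \<phi> s y \<in> V"
proof -
  have "((\<lambda>s. \<phi> s y) \<longlongrightarrow> y) (nhds 0)"
    using continuous_on_flow[of UNIV y] flow_0
    by (metis continuous_on_def iso_tuple_UNIV_I tendsto_at_iff_tendsto_nhds)
  then show ?thesis using topological_tendstoD assms by blast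
qed

lemma has_real_derivative_Sch_coef:
  assumes "in_chart S \<theta>"
  shows "((\<lambda>s. Sch_coef S (\<phi> s) \<theta>) has_real_derivative
    f_deriv 3 \<theta> + 4 / (chart_scale S)\<^sup>2 * f_deriv 1 \<theta>) (at 0)"
proof -
  define k where "k = chart_scale S"
  define t0 where "t0 = Phi S \<theta>"
  define c where "c = \<theta> - Psi S (Phi S \<theta>)"
  define K0 where "K0 = schwarzian_of (arctan_d1 k t0) (arctan_d2 k t0) (arctan_d3 k t0) * (tan_d1 k \<theta>)\<^sup>2"
  have k: "k \<noteq> 0" using chart_scale_pos[of S] by (simp add: k_def)
  have t0: "k * arctan (t0 / k) + c = \<theta>" by (simp add: c_def t0_def Psi_eq k_def)
  have inverse: "arctan_d1 k t0 * tan_d1 k \<theta> = 1"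
    using arctan_d1_tan_d1[OF k] by (simp add: t0_def Phi_eq k_def)
  have "\<forall>\<^sub>F s in nhds 0. \<phi> s \<theta> \<in> {x. cos (x / k) \<noteq> 0}"
    using assms by (intro eventually_flow_in_open open_chart[of S, folded k_def]) (simp add: in_chart_iff k_def)
  then have ev: "\<forall>\<^sub>F s in nhds 0. 2 / k\<^sup>2 * (flow_dx s \<theta>)\<^sup>2
      + schwarzian_of (flow_dx s \<theta>) (flow_dxx s \<theta>) (flow_dxxx s \<theta>) + K0 = Sch_coef S (\<phi> s) \<theta>"
  proof eventually_elim
    case (elim s)
    have "Sch_coef S (\<phi> s) \<theta> = schwarzian (\<lambda>t. k * tan (\<phi> s (k * arctan (t / k) + c) / k)) t0
        * (tan_d1 k \<theta>)\<^sup>2"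
      using lam_eq_tan_d1 assms by (simp add: Sch_coef_def tilde_map_eq t0_def c_def k_def in_chart_iff)
    also have "\<dots> = (2 / k\<^sup>2 * (flow_dx s \<theta>)\<^sup>2 + schwarzian_of (flow_dx s \<theta>) (flow_dxx s \<theta>) (flow_dxxx s \<theta>))
        * (arctan_d1 k t0 * tan_d1 k \<theta>)\<^sup>2 + K0"
      using schwarzian_flow_in_chart[OF k t0] elim unfolding K0_def
      by (simp add: algebra_simps power_mult_distrib)
    finally show ?case by (simp add: inverse)
  qed
  have R: "((\<lambda>s. 2 / k\<^sup>2 * (flow_dx s \<theta>)\<^sup>2
      + schwarzian_of (flow_dx s \<theta>) (flow_dxx s \<theta>) (flow_dxxx s \<theta>) + K0) has_real_derivative
      f_deriv 3 \<theta> + 4 / k\<^sup>2 * f_deriv 1 \<theta>) (at 0)"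
  proof -
    note d1 = has_real_derivative_flow_derivs_at_0(1)[of \<theta>]
    have "((\<lambda>s. (flow_dx s \<theta>)\<^sup>2) has_real_derivative 2 * f_deriv 1 \<theta>) (at 0)"
      using DERIV_mult[OF d1 d1] by (simp add: power2_eq_square)
    from DERIV_add[OF DERIV_add[OF DERIV_cmult[OF this, of "2 / k\<^sup>2"]
          has_real_derivative_schwarzian_of_flow_derivs] DERIV_const[of K0]]
    show ?thesis by (simp add: algebra_simps)
  qed
  show ?thesis
    using DERIV_cong_ev[OF refl ev refl] R by (simp add: k_def)
qed

end

lemma has_real_derivative_lam:
  assumes "cos (x / chart_scale S) \<noteq> 0"
  shows "(lam S has_real_derivative tan_d2 (chart_scale S) x) (at x)"
proof -
  have "chart_scale S \<noteq> 0" using chart_scale_pos[of S] by simp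
  then have "(tan_d1 (chart_scale S) has_real_derivative tan_d2 (chart_scale S) x) (at x)"
    using has_derivs3_on_tan_scaled assms unfolding has_derivs3_on_def by blast
  then show ?thesis
    by (rule has_field_derivative_transform_within_open[OF _ open_chart]) (use assms lam_eq_tan_d1 in auto)
qed

lemma Div_eq_on_chart:
  assumes "cos (x / chart_scale S) \<noteq> 0"
  shows "Div S f x = deriv f x + f x * (2 / chart_scale S * tan (x / chart_scale S))"
proof -
  have "tan_d1 (chart_scale S) x \<noteq> 0" using tan_d1_pos[of "chart_scale S" x] by simp
  then show ?thesis
    using assms lam_eq_tan_d1[OF assms] DERIV_imp_deriv[OF has_real_derivative_lam[OF assms]]
    by (simp add: Div_def tan_d2_def tan_d1_def field_simps)
qed

lemma deriv_Div_eq_on_chart: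
  assumes diff: "\<And>n x. (deriv ^^ n) f differentiable (at x)" and x: "cos (x / chart_scale S) \<noteq> 0"
  shows "deriv (Div S f) x = (deriv ^^ 2) f x + deriv f x * (2 / chart_scale S * tan (x / chart_scale S))
    + f x * (2 / (chart_scale S)\<^sup>2 * tan_d1 (chart_scale S) x)"
proof -
  define k where "k = chart_scale S"
  have k: "k \<noteq> 0" using chart_scale_pos[of S] by (simp add: k_def)
  have d0: "(f has_real_derivative deriv f x) (at x)"
    and d1: "(deriv f has_real_derivative (deriv ^^ 2) f x) (at x)"
    using diff[of 0 x] diff[of 1 x] by (simp_all add: DERIV_deriv_iff_real_differentiable numeral_2_eq_2)
  have d\<rho>: "((\<lambda>x. 2 / k * tan (x / k)) has_real_derivative 2 / k\<^sup>2 * tan_d1 k x) (at x)"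
    using DERIV_cmult[OF has_real_derivative_tan_scaled[OF k], of x "2 / k"] x
    by (simp add: k_def power2_eq_square)
  have "((\<lambda>x. deriv f x + f x * (2 / k * tan (x / k))) has_real_derivative
      (deriv ^^ 2) f x + deriv f x * (2 / k * tan (x / k)) + f x * (2 / k\<^sup>2 * tan_d1 k x)) (at x)"
    by (rule DERIV_cong[OF DERIV_add[OF d1 DERIV_mult[OF d0 d\<rho>]]]) (simp add: algebra_simps)
  then have "(Div S f has_real_derivative
      (deriv ^^ 2) f x + deriv f x * (2 / k * tan (x / k)) + f x * (2 / k\<^sup>2 * tan_d1 k x)) (at x)"
    by (rule has_field_derivative_transform_within_open[OF _ open_chart])
       (use x in \<open>auto simp: Div_eq_on_chart k_def\<close>)
  then show ?thesis by (simp add: DERIV_imp_deriv k_def)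
qed

text \<open>With \<open>\<rho> = \<lambda>'/\<lambda> = 2/k tan (x/k)\<close> one has \<open>Div \<xi> = f' + \<rho> f\<close> and
  \<open>s(\<xi>) = (Div \<xi>)'' - \<rho> (Div \<xi>)' = f''' + (2 \<rho>' - \<rho>\<^sup>2) f' + (\<rho>'' - \<rho> \<rho>') f\<close>; here
  \<open>\<rho>' - \<rho>\<^sup>2/2\<close> is the constant Schwarzian \<open>2/k\<^sup>2\<close> of the developing map.\<close>

lemma s_formula_eq:
  assumes diff: "\<And>n x. (deriv ^^ n) f differentiable (at x)" and chart: "in_chart S \<theta>"
  shows "s_formula S f \<theta> = (deriv ^^ 3) f \<theta> + 4 / (chart_scale S)\<^sup>2 * deriv f \<theta>"
proof -
  define k where "k = chart_scale S"
  define F where "F n = (deriv ^^ n) f" for n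
  define V where "V = {x. cos (x / k) \<noteq> 0}"
  define \<rho> where "\<rho> x = 2 / k * tan (x / k)" for x
  define \<delta>1 where "\<delta>1 x = F 2 x + F 1 x * \<rho> x + F 0 x * (2 / k\<^sup>2 * tan_d1 k x)" for x
  define \<delta>2 where "\<delta>2 = F 3 \<theta> + F 2 \<theta> * \<rho> \<theta> + F 1 \<theta> * (2 / k\<^sup>2 * tan_d1 k \<theta>)
    + (F 1 \<theta> * (2 / k\<^sup>2 * tan_d1 k \<theta>) + F 0 \<theta> * (2 / k\<^sup>2 * (\<rho> \<theta> * tan_d1 k \<theta>)))"
  have k: "k \<noteq> 0" using chart_scale_pos[of S] by (simp add: k_def)
  have V: "open V" "\<theta> \<in> V" using open_chart chart by (auto simp: V_def k_def in_chart_iff)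
  have d\<rho>: "(\<rho> has_real_derivative 2 / k\<^sup>2 * tan_d1 k \<theta>) (at \<theta>)"
    using DERIV_cmult[OF has_real_derivative_tan_scaled[OF k], of \<theta> "2 / k"] V(2)
    by (simp add: \<rho>_def[abs_def] V_def power2_eq_square)
  have d1: "(tan_d1 k has_real_derivative \<rho> \<theta> * tan_d1 k \<theta>) (at \<theta>)"
    using has_real_derivative_tan_d1[OF k] V(2) by (simp add: V_def \<rho>_def)
  have F3: "(F 2 has_real_derivative F 3 \<theta>) (at \<theta>)" and F2: "(F 1 has_real_derivative F 2 \<theta>) (at \<theta>)"
    and F1: "(F 0 has_real_derivative F 1 \<theta>) (at \<theta>)"
    using diff[of 2 \<theta>] diff[of 1 \<theta>] diff[of 0 \<theta>]
    by (simp_all add: F_def DERIV_deriv_iff_real_differentiable eval_nat_numeral)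
  have "(\<delta>1 has_real_derivative \<delta>2) (at \<theta>)"
    unfolding \<delta>1_def[abs_def]
    by (rule DERIV_cong[OF DERIV_add[OF DERIV_add[OF F3 DERIV_mult[OF F2 d\<rho>]]
          DERIV_mult[OF F1 DERIV_cmult[OF d1]]]])
       (simp add: \<delta>2_def algebra_simps)
  then have "((\<lambda>x. \<delta>1 x / tan_d1 k x) has_real_derivative
      (\<delta>2 * tan_d1 k \<theta> - \<delta>1 \<theta> * (\<rho> \<theta> * tan_d1 k \<theta>)) / (tan_d1 k \<theta> * tan_d1 k \<theta>)) (at \<theta>)"
    using tan_d1_pos[of k \<theta>] by (intro DERIV_divide d1) auto
  then have "((\<lambda>x. deriv (Div S f) x / lam S x) has_real_derivative
      (\<delta>2 * tan_d1 k \<theta> - \<delta>1 \<theta> * (\<rho> \<theta> * tan_d1 k \<theta>)) / (tan_d1 k \<theta> * tan_d1 k \<theta>)) (at \<theta>)"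
    by (rule has_field_derivative_transform_within_open[OF _ V])
       (auto simp: deriv_Div_eq_on_chart[OF diff] lam_eq_tan_d1 V_def k_def \<delta>1_def F_def \<rho>_def)
  then have "s_formula S f \<theta>
      = tan_d1 k \<theta> * ((\<delta>2 * tan_d1 k \<theta> - \<delta>1 \<theta> * (\<rho> \<theta> * tan_d1 k \<theta>)) / (tan_d1 k \<theta> * tan_d1 k \<theta>))"
    using lam_eq_tan_d1[of \<theta> S] V(2) by (simp add: s_formula_def DERIV_imp_deriv V_def k_def)
  also have "\<dots> = F 3 \<theta> + F 1 \<theta> * (4 / k\<^sup>2 * tan_d1 k \<theta> - (\<rho> \<theta>)\<^sup>2)"
    using tan_d1_pos[of k \<theta>] by (simp add: \<delta>1_def \<delta>2_def field_simps power2_eq_square)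
  also have "4 / k\<^sup>2 * tan_d1 k \<theta> - (\<rho> \<theta>)\<^sup>2 = 4 / k\<^sup>2"
    using k by (simp add: tan_d1_def \<rho>_def field_simps power2_eq_square)
  finally show ?thesis by (simp add: F_def k_def)
qed

section \<open>The Lie derivative of \<open>g\<^sub>1\<close> at the diagonal\<close>

definition sin_kernel :: "real \<Rightarrow> real \<Rightarrow> real" where
  "sin_kernel k z = 4 / (k\<^sup>2 * (sin (z / k))\<^sup>2)"

definition sin_kernel' :: "real \<Rightarrow> real \<Rightarrow> real" where
  "sin_kernel' k z = - 8 * cos (z / k) / (k ^ 3 * sin (z / k) ^ 3)"

lemma has_real_derivative_sin_kernel:
  assumes k: "k \<noteq> 0" and s: "sin (z / k) \<noteq> 0"
  shows "(sin_kernel k has_real_derivative sin_kernel' k z) (at z)"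
proof -
  have ds: "((\<lambda>z. sin (z / k)) has_real_derivative cos (z / k) * (1 / k)) (at z)"
    by (rule DERIV_fun_sin[OF DERIV_cdivide[OF DERIV_ident]])
  have "((\<lambda>z. 4 / (k\<^sup>2 * (sin (z / k) * sin (z / k)))) has_real_derivative
      (0 * (k\<^sup>2 * (sin (z / k) * sin (z / k))) - 4 * (k\<^sup>2 * (cos (z / k) * (1 / k) * sin (z / k)
        + cos (z / k) * (1 / k) * sin (z / k))))
      / ((k\<^sup>2 * (sin (z / k) * sin (z / k))) * (k\<^sup>2 * (sin (z / k) * sin (z / k))))) (at z)"
    by (rule DERIV_divide[OF DERIV_const DERIV_cmult[OF DERIV_mult[OF ds ds]]]) (use k s in simp)
  then show ?thesis
    using k s by (simp add: sin_kernel_def[abs_def] sin_kernel'_def field_simps power2_eq_square power3_eq_cube)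
qed

lemma filterlim_divide_at_0: "k > 0 \<Longrightarrow> filterlim (\<lambda>z::real. z / k) (at 0) (at 0)"
  by (rule filterlim_atI) (auto intro!: tendsto_divide_zero[OF tendsto_ident_at] simp: eventually_at_filter)

lemma sin_kernel_tendsto:
  assumes k: "k > 0"
  shows "((\<lambda>z. sin_kernel k z - 4 / z\<^sup>2) \<longlongrightarrow> 4 / (3 * k\<^sup>2)) (at 0)"
proof -
  have "((\<lambda>u::real. 1 / (sin u)\<^sup>2 - 1 / u\<^sup>2) \<longlongrightarrow> 1 / 3) (at 0)"
    by real_asymp
  from tendsto_mult_left[OF filterlim_compose[OF this filterlim_divide_at_0[OF k]], of "4 / k\<^sup>2"]
  have "((\<lambda>z. 4 / k\<^sup>2 * (1 / (sin (z / k))\<^sup>2 - 1 / (z / k)\<^sup>2)) \<longlongrightarrow> 4 / k\<^sup>2 * (1 / 3)) (at 0)"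
    by (simp add: o_def)
  moreover have "4 / k\<^sup>2 * (1 / (sin (z / k))\<^sup>2 - 1 / (z / k)\<^sup>2) = sin_kernel k z - 4 / z\<^sup>2" for z
    using k by (simp add: sin_kernel_def field_simps)
  ultimately show ?thesis by (simp add: mult.commute)
qed

lemma sin_kernel'_tendsto:
  assumes k: "k > 0"
  shows "((\<lambda>z. sin_kernel' k z + 8 / z ^ 3) \<longlongrightarrow> 0) (at 0)"
proof -
  have "((\<lambda>u::real. - 2 * cos u / (sin u) ^ 3 + 2 / u ^ 3) \<longlongrightarrow> 0) (at 0)"
    by real_asymp
  from tendsto_mult_left[OF filterlim_compose[OF this filterlim_divide_at_0[OF k]], of "4 / k ^ 3"]
  have "((\<lambda>z. 4 / k ^ 3 * (- 2 * cos (z / k) / (sin (z / k)) ^ 3 + 2 / (z / k) ^ 3)) \<longlongrightarrow> 4 / k ^ 3 * 0) (at 0)"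
    by (simp add: o_def)
  moreover have "4 / k ^ 3 * (- 2 * cos (z / k) / (sin (z / k)) ^ 3 + 2 / (z / k) ^ 3) = sin_kernel' k z + 8 / z ^ 3" for z
    using k by (simp add: sin_kernel'_def field_simps)
  ultimately show ?thesis by simp
qed

lemma taylor_quotient_eq:
  fixes F :: "nat \<Rightarrow> real \<Rightarrow> real"
  assumes F: "\<And>n x. (F n has_real_derivative F (Suc n) x) (at x)" and ab: "a \<noteq> b"
  obtains \<xi> \<eta> where "\<bar>\<xi> - b\<bar> \<le> \<bar>a - b\<bar>" "\<bar>\<eta> - b\<bar> \<le> \<bar>a - b\<bar>"
    "- 8 * (F 0 a - F 0 b) / (a - b) ^ 3 + 4 * (F 1 a + F 1 b) / (a - b)\<^sup>2 = - 4 / 3 * F 3 \<xi> + 2 * F 3 \<eta>"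
proof -
  obtain \<xi> where \<xi>: "if a < b then a < \<xi> \<and> \<xi> < b else b < \<xi> \<and> \<xi> < a"
    "F 0 a = (\<Sum>m<3. F m b / fact m * (a - b) ^ m) + F 3 \<xi> / fact 3 * (a - b) ^ 3"
    using Taylor[of 3 F "F 0" "min a b" "max a b" b a] F ab by auto
  obtain \<eta> where \<eta>: "if a < b then a < \<eta> \<and> \<eta> < b else b < \<eta> \<and> \<eta> < a"
    "F 1 a = (\<Sum>m<2. F (Suc m) b / fact m * (a - b) ^ m) + F (Suc 2) \<eta> / fact 2 * (a - b)\<^sup>2"
    using Taylor[of 2 "\<lambda>m. F (Suc m)" "F 1" "min a b" "max a b" b a] F ab by auto
  define z where "z = a - b"
  have z: "z \<noteq> 0" using ab by (simp add: z_def)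
  have e1: "F 0 a - F 0 b = F 1 b * z + F 2 b / 2 * z\<^sup>2 + F 3 \<xi> / 6 * z ^ 3"
    and e2: "F 1 a + F 1 b = 2 * F 1 b + F 2 b * z + F 3 \<eta> / 2 * z\<^sup>2"
    using \<xi>(2) \<eta>(2) by (simp_all add: z_def eval_nat_numeral fact_numeral)
  have q1: "- 8 * (F 1 b * z + F 2 b / 2 * z\<^sup>2 + F 3 \<xi> / 6 * z ^ 3) / z ^ 3
      = - 8 * F 1 b / z\<^sup>2 - 4 * F 2 b / z - 4 / 3 * F 3 \<xi>"
    and q2: "4 * (2 * F 1 b + F 2 b * z + F 3 \<eta> / 2 * z\<^sup>2) / z\<^sup>2 = 8 * F 1 b / z\<^sup>2 + 4 * F 2 b / z + 2 * F 3 \<eta>"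
    using z by (simp_all add: field_simps power2_eq_square power3_eq_cube)
  have "- 8 * (F 0 a - F 0 b) / (a - b) ^ 3 + 4 * (F 1 a + F 1 b) / (a - b)\<^sup>2
      = - 4 / 3 * F 3 \<xi> + 2 * F 3 \<eta>"
    unfolding z_def[symmetric] e1 e2 q1 q2 by simp
  moreover have "\<bar>\<xi> - b\<bar> \<le> \<bar>a - b\<bar>" "\<bar>\<eta> - b\<bar> \<le> \<bar>a - b\<bar>"
    using \<xi>(1) \<eta>(1) by (auto split: if_splits)
  ultimately show ?thesis using that by blast
qed

lemma taylor_quotient_tendsto:
  fixes F :: "nat \<Rightarrow> real \<Rightarrow> real"
  assumes F: "\<And>n x. (F n has_real_derivative F (Suc n) x) (at x)"
  shows "((\<lambda>p. - 8 * (F 0 (fst p) - F 0 (snd p)) / (fst p - snd p) ^ 3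
      + 4 * (F 1 (fst p) + F 1 (snd p)) / (fst p - snd p)\<^sup>2) \<longlongrightarrow> 2 / 3 * F 3 \<theta>)
    (at (\<theta>, \<theta>) within {p. fst p \<noteq> snd p})"
proof (rule tendstoI)
  fix e :: real assume e: "e > 0"
  obtain d where d: "d > 0" "\<And>y. dist y \<theta> < d \<Longrightarrow> dist (F 3 y) (F 3 \<theta>) < e / 4"
    using DERIV_isCont[OF F[of 3 \<theta>]] e unfolding continuous_at_eps_delta
    by (metis zero_less_divide_iff zero_less_numeral)
  have "\<forall>\<^sub>F p in at (\<theta>, \<theta>) within {p. fst p \<noteq> snd p}. dist p (\<theta>, \<theta>) < d / 3"
    using d(1) by (intro tendstoD[OF tendsto_ident_at]) auto
  moreover have "\<forall>\<^sub>F p in at (\<theta>, \<theta>) within {p. fst p \<noteq> snd p}. fst p \<noteq> snd p"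
    by (simp add: eventually_at_filter)
  ultimately show "\<forall>\<^sub>F p in at (\<theta>, \<theta>) within {p. fst p \<noteq> snd p}.
      dist (- 8 * (F 0 (fst p) - F 0 (snd p)) / (fst p - snd p) ^ 3
        + 4 * (F 1 (fst p) + F 1 (snd p)) / (fst p - snd p)\<^sup>2) (2 / 3 * F 3 \<theta>) < e"
  proof eventually_elim
    case (elim p)
    obtain a b where p: "p = (a, b)" by fastforce
    have a: "\<bar>a - \<theta>\<bar> < d / 3" and b: "\<bar>b - \<theta>\<bar> < d / 3"
      using elim(1) dist_fst_le[of p "(\<theta>, \<theta>)"] dist_snd_le[of p "(\<theta>, \<theta>)"] by (auto simp: p dist_real_def)
    obtain \<xi> \<eta> where \<xi>\<eta>: "\<bar>\<xi> - b\<bar> \<le> \<bar>a - b\<bar>" "\<bar>\<eta> - b\<bar> \<le> \<bar>a - b\<bar>"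
      "- 8 * (F 0 a - F 0 b) / (a - b) ^ 3 + 4 * (F 1 a + F 1 b) / (a - b)\<^sup>2 = - 4 / 3 * F 3 \<xi> + 2 * F 3 \<eta>"
      using taylor_quotient_eq[where F=F, OF F] elim(2) p by (metis fst_conv snd_conv)
    have "\<bar>\<xi> - \<theta>\<bar> < d" "\<bar>\<eta> - \<theta>\<bar> < d"
      using \<xi>\<eta>(1,2) a b by (auto simp: abs_if split: if_splits)
    then have "\<bar>F 3 \<xi> - F 3 \<theta>\<bar> < e / 4" "\<bar>F 3 \<eta> - F 3 \<theta>\<bar> < e / 4"
      using d(2)[of \<xi>] d(2)[of \<eta>] by (auto simp: dist_real_def)
    then show ?case
      unfolding p dist_real_def fst_conv snd_conv \<xi>\<eta>(3) abs_less_iff by linarith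
  qed
qed

lemma G1_eq_sin_kernel:
  assumes x: "cos (x / chart_scale S) \<noteq> 0" and y: "cos (y / chart_scale S) \<noteq> 0"
  shows "G1 S x y = sin_kernel (chart_scale S) (x - y)"
proof -
  define k where "k = chart_scale S"
  have k: "k \<noteq> 0" using chart_scale_pos[of S] by (simp add: k_def)
  have cx: "cos (x / k) \<noteq> 0" and cy: "cos (y / k) \<noteq> 0" using x y by (simp_all add: k_def)
  have lam: "lam S z = (inverse (cos (z / k)))\<^sup>2" if "cos (z / k) \<noteq> 0" for z
    using lam_eq_tan_d1[of z S] tan_sec[OF that] that by (simp add: tan_d1_def k_def)
  have "Phi S x - Phi S y = k * (sin (x / k - y / k) / (cos (x / k) * cos (y / k)))"
    using cx cy by (simp add: Phi_eq k_def[symmetric] tan_def sin_diff field_simps)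
  then have "G1 S x y = 4 * (inverse (cos (x / k)))\<^sup>2 * (inverse (cos (y / k)))\<^sup>2
      / (k * (sin (x / k - y / k) / (cos (x / k) * cos (y / k))))\<^sup>2"
    by (simp add: G1_def lam cx cy)
  also have "\<dots> = 4 / (k\<^sup>2 * (sin (x / k - y / k))\<^sup>2)"
    \<comment> \<open>where the sine vanishes, both sides are \<open>0\<close> by the convention \<open>x / 0 = 0\<close>\<close>
    using cx cy k by (cases "sin (x / k - y / k) = 0") (simp_all add: field_simps power2_eq_square)
  finally show ?thesis by (simp add: sin_kernel_def k_def diff_divide_distrib)
qed

lemma LG1_eq_near_diagonal:
  assumes a: "cos (a / chart_scale S) \<noteq> 0" and b: "cos (b / chart_scale S) \<noteq> 0"
    and ab: "a \<noteq> b" "\<bar>a - b\<bar> < chart_scale S * pi"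
  shows "LG1 S f (a, b) = (f a - f b) * sin_kernel' (chart_scale S) (a - b)
    + sin_kernel (chart_scale S) (a - b) * (deriv f a + deriv f b)"
proof -
  define k where "k = chart_scale S"
  have k: "k > 0" using chart_scale_pos[of S] by (simp add: k_def)
  have "sin ((a - b) / k) \<noteq> 0"
  proof
    assume "sin ((a - b) / k) = 0"
    moreover have "- pi < (a - b) / k" "(a - b) / k < pi"
      using ab(2) k by (auto simp: k_def abs_less_iff field_simps)
    ultimately show False using sin_eq_0_pi ab(1) k by fastforce
  qed
  then have dK: "(sin_kernel k has_real_derivative sin_kernel' k (a - b)) (at (a - b))"
    using k by (intro has_real_derivative_sin_kernel) auto
  have chart: "open {x. cos (x / k) \<noteq> 0}" using open_chart[of S] by (simp add: k_def)
  have "((\<lambda>x. x - b) has_real_derivative 1) (at a)"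
    using DERIV_diff[OF DERIV_ident DERIV_const[of b]] by simp
  from DERIV_chain2[OF dK this]
  have "((\<lambda>x. sin_kernel k (x - b)) has_real_derivative sin_kernel' k (a - b)) (at a)" by simp
  then have "((\<lambda>x. G1 S x b) has_real_derivative sin_kernel' k (a - b)) (at a)"
    by (rule has_field_derivative_transform_within_open[OF _ chart])
       (use a b in \<open>auto simp: k_def G1_eq_sin_kernel\<close>)
  moreover have "((\<lambda>y. a - y) has_real_derivative - 1) (at b)"
    using DERIV_diff[OF DERIV_const[of a] DERIV_ident] by simp
  from DERIV_chain2[OF dK this]
  have "((\<lambda>y. sin_kernel k (a - y)) has_real_derivative - sin_kernel' k (a - b)) (at b)" by simp
  then have "((\<lambda>y. G1 S a y) has_real_derivative - sin_kernel' k (a - b)) (at b)"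
    by (rule has_field_derivative_transform_within_open[OF _ chart])
       (use a b in \<open>auto simp: k_def G1_eq_sin_kernel\<close>)
  ultimately show ?thesis
    using G1_eq_sin_kernel[OF a b] by (simp add: LG1_def DERIV_imp_deriv k_def algebra_simps)
qed

lemma off_diag_subset: "off_diag S \<subseteq> {p. fst p \<noteq> snd p}"
  unfolding off_diag_def by (auto dest: spec[of _ 0])

lemma eventually_LG1_eq_near_diagonal:
  assumes chart: "in_chart S \<theta>"
  shows "\<forall>\<^sub>F p in at (\<theta>, \<theta>) within off_diag S. LG1 S f p
    = (f (fst p) - f (snd p)) * sin_kernel' (chart_scale S) (fst p - snd p)
      + sin_kernel (chart_scale S) (fst p - snd p) * (deriv f (fst p) + deriv f (snd p))"
proof -
  define k where "k = chart_scale S"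
  define Fl where "Fl = at (\<theta>, \<theta>) within off_diag S"
  have k: "k > 0" using chart_scale_pos[of S] by (simp add: k_def)
  have fst: "(fst \<longlongrightarrow> \<theta>) Fl" and snd: "(snd \<longlongrightarrow> \<theta>) Fl"
    unfolding Fl_def using tendsto_fst[OF tendsto_ident_at] tendsto_snd[OF tendsto_ident_at] by auto
  have V: "open {x. cos (x / k) \<noteq> 0}" "\<theta> \<in> {x. cos (x / k) \<noteq> 0}"
    using open_chart[of S] chart by (auto simp: k_def in_chart_iff)
  have "\<forall>\<^sub>F p in Fl. cos (fst p / k) \<noteq> 0 \<and> cos (snd p / k) \<noteq> 0"
    using eventually_conj[OF topological_tendstoD[OF fst V] topological_tendstoD[OF snd V]] by simp
  moreover have "\<forall>\<^sub>F p in Fl. \<bar>fst p - snd p\<bar> < k * pi"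
    using tendstoD[OF tendsto_diff[OF fst snd], of "k * pi"] k by (auto simp: dist_real_def)
  moreover have "\<forall>\<^sub>F p in Fl. fst p \<noteq> snd p"
    unfolding Fl_def eventually_at_filter using off_diag_subset by (auto intro: always_eventually)
  ultimately show ?thesis
    unfolding Fl_def[symmetric]
    by eventually_elim (use LG1_eq_near_diagonal in \<open>force simp: k_def\<close>)
qed

lemma LG1_tendsto:
  assumes diff: "\<And>n x. (deriv ^^ n) f differentiable (at x)" and chart: "in_chart S \<theta>"
  shows "(LG1 S f \<longlongrightarrow> 2 / 3 * (deriv ^^ 3) f \<theta> + 8 / (3 * (chart_scale S)\<^sup>2) * deriv f \<theta>)
    (at (\<theta>, \<theta>) within off_diag S)"
proof -
  define k where "k = chart_scale S"
  define F where "F n = (deriv ^^ n) f" for n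
  define z where "z p = fst p - snd p" for p :: "real \<times> real"
  define Fl where "Fl = at (\<theta>, \<theta>) within off_diag S"
  have k: "k > 0" using chart_scale_pos[of S] by (simp add: k_def)
  have dF: "(F n has_real_derivative F (Suc n) x) (at x)" for n x
    using diff by (simp add: F_def DERIV_deriv_iff_real_differentiable)
  have fst: "(fst \<longlongrightarrow> \<theta>) Fl" and snd: "(snd \<longlongrightarrow> \<theta>) Fl"
    unfolding Fl_def using tendsto_fst[OF tendsto_ident_at] tendsto_snd[OF tendsto_ident_at] by auto
  have ne: "\<forall>\<^sub>F p in Fl. z p \<noteq> 0"
    unfolding Fl_def eventually_at_filter using off_diag_subset by (auto simp: z_def intro: always_eventually)
  have z: "filterlim z (at 0) Fl"
    using tendsto_diff[OF fst snd] ne by (auto simp: z_def[abs_def] filterlim_at)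
  have T: "((\<lambda>p. - 8 * (F 0 (fst p) - F 0 (snd p)) / z p ^ 3 + 4 * (F 1 (fst p) + F 1 (snd p)) / (z p)\<^sup>2)
      \<longlongrightarrow> 2 / 3 * F 3 \<theta>) Fl"
    unfolding z_def Fl_def
    by (rule tendsto_within_subset[OF taylor_quotient_tendsto[where F=F, OF dF] off_diag_subset])
  have K: "((\<lambda>p. sin_kernel k (z p) - 4 / (z p)\<^sup>2) \<longlongrightarrow> 4 / (3 * k\<^sup>2)) Fl"
    and K': "((\<lambda>p. sin_kernel' k (z p) + 8 / z p ^ 3) \<longlongrightarrow> 0) Fl"
    using filterlim_compose[OF sin_kernel_tendsto[OF k] z] filterlim_compose[OF sin_kernel'_tendsto[OF k] z]
    by (simp_all add: o_def)
  have "((\<lambda>p. - 8 * (F 0 (fst p) - F 0 (snd p)) / z p ^ 3 + 4 * (F 1 (fst p) + F 1 (snd p)) / (z p)\<^sup>2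
      + (F 0 (fst p) - F 0 (snd p)) * (sin_kernel' k (z p) + 8 / z p ^ 3)
      + (sin_kernel k (z p) - 4 / (z p)\<^sup>2) * (F 1 (fst p) + F 1 (snd p)))
    \<longlongrightarrow> 2 / 3 * F 3 \<theta> + (F 0 \<theta> - F 0 \<theta>) * 0 + 4 / (3 * k\<^sup>2) * (F 1 \<theta> + F 1 \<theta>)) Fl"
    by (intro tendsto_add tendsto_mult tendsto_diff T K K' isCont_tendsto_compose[OF DERIV_isCont[OF dF]]
        fst snd)
  moreover have "\<forall>\<^sub>F p in Fl. - 8 * (F 0 (fst p) - F 0 (snd p)) / z p ^ 3 + 4 * (F 1 (fst p) + F 1 (snd p)) / (z p)\<^sup>2
      + (F 0 (fst p) - F 0 (snd p)) * (sin_kernel' k (z p) + 8 / z p ^ 3)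
      + (sin_kernel k (z p) - 4 / (z p)\<^sup>2) * (F 1 (fst p) + F 1 (snd p)) = LG1 S f p"
    using eventually_LG1_eq_near_diagonal[OF chart, of f] unfolding Fl_def[symmetric]
    by eventually_elim (simp add: F_def z_def k_def algebra_simps add_divide_distrib diff_divide_distrib)
  ultimately have "(LG1 S f \<longlongrightarrow> 2 / 3 * F 3 \<theta> + 8 / (3 * k\<^sup>2) * F 1 \<theta>) Fl"
    by (auto simp: field_simps elim: Lim_transform_eventually)
  then show ?thesis by (simp add: Fl_def F_def k_def)
qed

theorem mainTheorem12:
  fixes S :: proj_circle and f :: "real \<Rightarrow> real" and \<phi> :: "real \<Rightarrow> real \<Rightarrow> real"
    and \<theta> :: real
  assumes "smooth_vf S f"
    and "is_flow f \<phi>"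
    and "in_chart S \<theta>"
  shows "((\<lambda>s. Sch_coef S (\<phi> s) \<theta>) has_real_derivative s_formula S f \<theta>) (at 0)
     \<and> (\<exists>L. (LG1 S f \<longlongrightarrow> L) (at (\<theta>, \<theta>) within off_diag S)
            \<and> s_formula S f \<theta> = 3 / 2 * L)"
proof -
  interpret bounded_smooth_flow f \<phi>
    using assms(1,2) by (rule bounded_smooth_flow_if_smooth_vf)
  have diff: "\<And>n x. (deriv ^^ n) f differentiable (at x)"
    using assms(1) by (simp add: smooth_vf_def)
  have s: "s_formula S f \<theta> = (deriv ^^ 3) f \<theta> + 4 / (chart_scale S)\<^sup>2 * deriv f \<theta>"
    by (rule s_formula_eq[OF diff assms(3)])
  have "((\<lambda>s. Sch_coef S (\<phi> s) \<theta>) has_real_derivative s_formula S f \<theta>) (at 0)"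
    using has_real_derivative_Sch_coef[OF assms(3)] by (simp add: s f_deriv_def)
  moreover have "s_formula S f \<theta>
      = 3 / 2 * (2 / 3 * (deriv ^^ 3) f \<theta> + 8 / (3 * (chart_scale S)\<^sup>2) * deriv f \<theta>)"
    by (simp add: s field_simps)
  ultimately show ?thesis
    using LG1_tendsto[OF diff assms(3)] by blast
qed

end
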